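(* Assume the setting of the aggregated-control regret theorem, but replace the gradient-growth bound on the costs by: there is $\bar L>0$ such that for all $i$, $t$ and all $(x,u),(\tilde x,\tilde u)$, $|c_t^i(x,u)-c_t^i(\tilde x,\tilde u)|\le\bar L(\|x-\tilde x\|+\|u-\tilde u\|)$ (costs still convex, $\|w_t\|\le W$, global strong stability). Then there exist constants $c_0,C>0$ depending only polynomially on $W,\bar\gamma^{-1},\bar\kappa,\max_j\|B_j\|,\bar L,d$, and an absolute constant $c\ge0$, such that if agent $i$ runs the aggregated-control gradient perturbation controller with $\eta=c_0/\sqrt T$ and $H=\lceil\log(2\bar\kappa N\sqrt T)/\bar\gamma\rceil$ and every other agent $j$ plays a DAC policy with parameters $M_{j,t}\in\mathcal M_j$, then for all $T\ge H+1$, $$\mathrm{Reg}_i^{H+1:T}\le C\sqrt T\,(1+\log(NT))^{c}.$$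
   Context: Linear dynamical system with $N$ agents: $x_{t+1}=Ax_t+\sum_{j=1}^N B_ju_t^j+w_t$, $t\ge0$, $x_0=0$; $w_s=0$ for $s<0$; agent $j$ incurs $c_t^j(x_t,u_t^j)$. $(\kappa,\gamma)$-strong stability of $K$ for $(A,B)$: $\|K\|\le\kappa$ and $A-BK=QLQ^{-1}$ with $\|L\|\le1-\gamma$, $\|Q\|\|Q^{-1}\|\le\kappa$. Global strong stability: each agent $j$ knows $K_j$ such that $K=(K_1;\dots;K_N)$ is $(\bar\kappa,\bar\gamma)$-strongly stable for $(A,[B_1,\dots,B_N])$, $\bar\kappa\ge1$; $\bar A_K=A-\sum_jB_jK_j$. $\mathcal M_j=\{M_j=(M_j^{[0]},\dots,M_j^{[H-1]}):\|M_j^{[p-1]}\|\le2\bar\kappa^2(1-\bar\gamma)^p,\ p=1,\dots,H\}$. Transfer matrix $\bar\Psi^h_{t,l}(M_{t-h:t})=\bar A_K^l\mathbf 1_{l\le h}+\sum_{k=0}^h\bar A_K^k\sum_jB_jM_{j,t-k}^{[l-k-1]}\mathbf 1_{1\le l-k\le H}$; ideal state $y_t=\sum_{l=0}^{2H}\bar\Psi^H_{t-1,l}(M_{t-1-H:t-1})w_{t-1-l}$; ideal action $v_t^i=-K_iy_t+\sum_{p=1}^HM_{i,t}^{[p-1]}w_{t-p}$. The aggregated-control algorithm of agent $i$ computes $w_{t-1}=x_t-Ax_{t-1}-\sum_jB_ju_{t-1}^j$ from $x_t$ and the observed $\sum_{j\ne i}B_ju_t^j$, plays $u_t^i=-K_ix_t+\sum_{p=1}^HM_{i,t}^{[p-1]}w_{t-p}$,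 and updates $M_{i,t+1}=\Pi_{\mathcal M_i}[M_{i,t}-\eta\nabla\ell_t^i(M_{i,t})]$ with $\ell_t^i(M)=c_t^i(y_t,v_t^i)$ evaluated with agent $i$'s parameter equal to $M$ at times $t-1-H,\dots,t$ and other agents' parameters equal to their actual ones. $\mathrm{Reg}_i^{H+1:T}=\max_{\|w_t\|\le W}\big(\sum_{t=H+1}^Tc_t^i(x_t,u_t^i)-\min_{M_*\in\mathcal M_i}\sum_{t=H+1}^Tc_t^i(x_t^{M_*},u_t^{i,M_*})\big)$, the counterfactual trajectory having agent $i$ play the DAC policy with constant $M_*$ and each other agent $j$ the DAC policy with its parameters $M_{j,t}$, from $x_0=0$ with the same disturbances. *)

theory Defs
  imports Complex_Main "HOL-Library.Function_Algebras"
begin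

text \<open>A vector of dimension r is a function nat => real of which only the
  coordinates 0..r-1 are used; a matrix with r rows and c columns is a
  function nat => nat => real of which only the entries (a,b), a<r, b<c,
  are used.  Every operation below truncates to the relevant indices.\<close>

type_synonym vec = "nat \<Rightarrow> real"
type_synonym mat = "nat \<Rightarrow> nat \<Rightarrow> real"

definition vnorm :: "nat \<Rightarrow> vec \<Rightarrow> real" where
  "vnorm r x = sqrt (\<Sum>a<r. (x a)^2)"

definition mv :: "nat \<Rightarrow> mat \<Rightarrow> vec \<Rightarrow> vec" where
  "mv c X x = (\<lambda>a. \<Sum>b<c. X a b * x b)"

definition mm :: "nat \<Rightarrow> mat \<Rightarrow> mat \<Rightarrow> mat" where
  "mm c X Y = (\<lambda>a b. \<Sum>l<c. X a l * Y l b)"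

definition opnorm :: "nat \<Rightarrow> nat \<Rightarrow> mat \<Rightarrow> real" where
  "opnorm r c X = Sup {vnorm r (mv c X x) | x. vnorm c x \<le> 1}"

text \<open>Operator norm of the stacked matrix K = (K_1; ...; K_N), K_j of size m_j x n.\<close>
definition stack_opnorm :: "nat \<Rightarrow> (nat \<Rightarrow> nat) \<Rightarrow> nat \<Rightarrow> (nat \<Rightarrow> mat) \<Rightarrow> real" where
  "stack_opnorm n m N K =
     Sup {sqrt (\<Sum>j<N. (vnorm (m j) (mv n (K j) x))^2) | x. vnorm n x \<le> 1}"

definition AK :: "(nat \<Rightarrow> nat) \<Rightarrow> nat \<Rightarrow> mat \<Rightarrow> (nat \<Rightarrow> mat) \<Rightarrow> (nat \<Rightarrow> mat) \<Rightarrow> mat" where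
  "AK m N A B K = (\<lambda>a b. A a b - (\<Sum>j<N. \<Sum>l<m j. B j a l * K j l b))"

definition glob_strongly_stable ::
  "nat \<Rightarrow> (nat \<Rightarrow> nat) \<Rightarrow> nat \<Rightarrow> mat \<Rightarrow> (nat \<Rightarrow> mat) \<Rightarrow> (nat \<Rightarrow> mat) \<Rightarrow> real \<Rightarrow> real \<Rightarrow> bool" where
  "glob_strongly_stable n m N A B K \<kappa> \<gamma> \<longleftrightarrow>
     stack_opnorm n m N K \<le> \<kappa> \<and>
     (\<exists>Q Qi L. (\<forall>a<n. \<forall>b<n. mm n Q Qi a b = (if a = b then 1 else 0)
                          \<and> mm n Qi Q a b = (if a = b then 1 else 0))
        \<and> (\<forall>a<n. \<forall>b<n. AK m N A B K a b = mm n (mm n Q L) Qi a b)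
        \<and> opnorm n n L \<le> 1 - \<gamma>
        \<and> opnorm n n Q * opnorm n n Qi \<le> \<kappa>)"

definition wp :: "(nat \<Rightarrow> vec) \<Rightarrow> nat \<Rightarrow> nat \<Rightarrow> vec" where
  "wp w t p = (if p \<le> t then w (t - p) else 0)"

text \<open>DAC parameter set  M_j  (M^{[p-1]} are m_j x n matrices, p = 1..H).\<close>
definition calM :: "nat \<Rightarrow> nat \<Rightarrow> nat \<Rightarrow> real \<Rightarrow> real \<Rightarrow> (nat \<Rightarrow> mat) set" where
  "calM n mj H \<kappa> \<gamma> =
     {M. \<forall>p\<in>{1..H}. opnorm mj n (M (p - 1)) \<le> 2 * \<kappa>^2 * (1 - \<gamma>)^p}"

definition dac_act :: "nat \<Rightarrow> nat \<Rightarrow> mat \<Rightarrow> (nat \<Rightarrow> mat) \<Rightarrow> (nat \<Rightarrow> vec) \<Rightarrow> nat \<Rightarrow> vec \<Rightarrow> vec" where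
  "dac_act n H Kj Mj w t x = - mv n Kj x + (\<Sum>p\<in>{1..H}. mv n (Mj (p - 1)) (wp w t p))"

primrec traj :: "nat \<Rightarrow> (nat \<Rightarrow> nat) \<Rightarrow> nat \<Rightarrow> mat \<Rightarrow> (nat \<Rightarrow> mat) \<Rightarrow> (nat \<Rightarrow> mat) \<Rightarrow> nat
    \<Rightarrow> (nat \<Rightarrow> nat \<Rightarrow> nat \<Rightarrow> mat) \<Rightarrow> (nat \<Rightarrow> vec) \<Rightarrow> nat \<Rightarrow> vec" where
  "traj n m N A B K H P w 0 = 0"
| "traj n m N A B K H P w (Suc t) =
     mv n A (traj n m N A B K H P w t)
     + (\<Sum>j<N. mv (m j) (B j) (dac_act n H (K j) (P j t) w t (traj n m N A B K H P w t)))
     + w t"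

text \<open>Ideal state  y_t = sum_{l=0}^{2H} Psi^H_{t-1,l}(M_{t-1-H:t-1}) w_{t-1-l}.
  (Parameters at negative times only ever multiply w_s with s < 0, i.e. zero.)\<close>
definition ideal_state :: "nat \<Rightarrow> (nat \<Rightarrow> nat) \<Rightarrow> nat \<Rightarrow> mat \<Rightarrow> (nat \<Rightarrow> mat) \<Rightarrow> (nat \<Rightarrow> mat) \<Rightarrow> nat
    \<Rightarrow> (nat \<Rightarrow> nat \<Rightarrow> nat \<Rightarrow> mat) \<Rightarrow> (nat \<Rightarrow> vec) \<Rightarrow> nat \<Rightarrow> vec" where
  "ideal_state n m N A B K H P w t =
     (\<Sum>l\<in>{0..2*H}.
        (if l \<le> H then (mv n (AK m N A B K) ^^ l) (wp w t (Suc l)) else 0)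
      + (\<Sum>k\<in>{0..H}.
           if k < l \<and> l - k \<le> H then
             (mv n (AK m N A B K) ^^ k)
               (\<Sum>j<N. mv (m j) (B j) (mv n (P j (t - 1 - k) (l - k - 1)) (wp w t (Suc l))))
           else 0))"

definition ideal_loss :: "nat \<Rightarrow> (nat \<Rightarrow> nat) \<Rightarrow> nat \<Rightarrow> mat \<Rightarrow> (nat \<Rightarrow> mat) \<Rightarrow> (nat \<Rightarrow> mat) \<Rightarrow> nat
    \<Rightarrow> (nat \<Rightarrow> nat \<Rightarrow> nat \<Rightarrow> mat) \<Rightarrow> (nat \<Rightarrow> vec) \<Rightarrow> nat \<Rightarrow> (nat \<Rightarrow> vec \<Rightarrow> vec \<Rightarrow> real)
    \<Rightarrow> nat \<Rightarrow> (nat \<Rightarrow> mat) \<Rightarrow> real" where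
  "ideal_loss n m N A B K H P w i c t M =
     (let y = ideal_state n m N A B K H (P(i := (\<lambda>_. M))) w t
      in c t y (dac_act n H (K i) M w t y))"

definition frob :: "nat \<Rightarrow> nat \<Rightarrow> nat \<Rightarrow> (nat \<Rightarrow> mat) \<Rightarrow> (nat \<Rightarrow> mat) \<Rightarrow> real" where
  "frob H r c X Y = (\<Sum>p<H. \<Sum>a<r. \<Sum>b<c. X p a b * Y p a b)"

definition is_proj :: "nat \<Rightarrow> nat \<Rightarrow> nat \<Rightarrow> (nat \<Rightarrow> mat) set \<Rightarrow> (nat \<Rightarrow> mat) \<Rightarrow> (nat \<Rightarrow> mat) \<Rightarrow> bool" where
  "is_proj H r c S Z X \<longleftrightarrow> X \<in> S \<and>
     (\<forall>Y\<in>S. frob H r c (X - Z) (X - Z) \<le> frob H r c (Y - Z) (Y - Z))"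

definition subgrad :: "nat \<Rightarrow> nat \<Rightarrow> nat \<Rightarrow> ((nat \<Rightarrow> mat) \<Rightarrow> real) \<Rightarrow> (nat \<Rightarrow> mat) \<Rightarrow> (nat \<Rightarrow> mat) \<Rightarrow> bool" where
  "subgrad H r c f X g \<longleftrightarrow> (\<forall>Y. f Y \<ge> f X + frob H r c g (Y - X))"

definition agc_run :: "nat \<Rightarrow> (nat \<Rightarrow> nat) \<Rightarrow> nat \<Rightarrow> mat \<Rightarrow> (nat \<Rightarrow> mat) \<Rightarrow> (nat \<Rightarrow> mat) \<Rightarrow> nat
    \<Rightarrow> real \<Rightarrow> real \<Rightarrow> real \<Rightarrow> nat \<Rightarrow> (nat \<Rightarrow> vec \<Rightarrow> vec \<Rightarrow> real) \<Rightarrow> (nat \<Rightarrow> vec)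
    \<Rightarrow> (nat \<Rightarrow> nat \<Rightarrow> nat \<Rightarrow> mat) \<Rightarrow> bool" where
  "agc_run n m N A B K H \<kappa> \<gamma> \<eta> i c w P \<longleftrightarrow>
     P i 0 \<in> calM n (m i) H \<kappa> \<gamma> \<and>
     (\<forall>t. \<exists>g. subgrad H (m i) n (ideal_loss n m N A B K H P w i c t) (P i t) g
             \<and> is_proj H (m i) n (calM n (m i) H \<kappa> \<gamma>) (P i t - (\<lambda>p a b. \<eta> * g p a b)) (P i (Suc t)))"

definition convex_cost :: "(vec \<Rightarrow> vec \<Rightarrow> real) \<Rightarrow> bool" where
  "convex_cost f \<longleftrightarrow> (\<forall>x x' u u' \<theta>. 0 \<le> \<theta> \<and> \<theta> \<le> 1 \<longrightarrow>
      f (\<lambda>a. \<theta> * x a + (1 - \<theta>) * x' a) (\<lambda>a. \<theta> * u a + (1 - \<theta>) * u' a)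
        \<le> \<theta> * f x u + (1 - \<theta>) * f x' u')"

definition lipschitz_cost :: "nat \<Rightarrow> nat \<Rightarrow> real \<Rightarrow> (vec \<Rightarrow> vec \<Rightarrow> real) \<Rightarrow> bool" where
  "lipschitz_cost n mi L f \<longleftrightarrow> (\<forall>x u x' u'.
      \<bar>f x u - f x' u'\<bar> \<le> L * (vnorm n (x - x') + vnorm mi (u - u')))"

definition Hpar :: "real \<Rightarrow> real \<Rightarrow> nat \<Rightarrow> nat \<Rightarrow> nat" where
  "Hpar \<kappa> \<gamma> N T = nat \<lceil>ln (2 * \<kappa> * real N * sqrt (real T)) / \<gamma>\<rceil>"

definition regret_vs :: "nat \<Rightarrow> (nat \<Rightarrow> nat) \<Rightarrow> nat \<Rightarrow> mat \<Rightarrow> (nat \<Rightarrow> mat) \<Rightarrow> (nat \<Rightarrow> mat) \<Rightarrow> nat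
    \<Rightarrow> (nat \<Rightarrow> nat \<Rightarrow> nat \<Rightarrow> mat) \<Rightarrow> (nat \<Rightarrow> vec) \<Rightarrow> nat \<Rightarrow> (nat \<Rightarrow> vec \<Rightarrow> vec \<Rightarrow> real)
    \<Rightarrow> nat \<Rightarrow> (nat \<Rightarrow> mat) \<Rightarrow> real" where
  "regret_vs n m N A B K H P w i c T Ms =
     (\<Sum>t\<in>{H+1..T}. c t (traj n m N A B K H P w t)
                         (dac_act n H (K i) (P i t) w t (traj n m N A B K H P w t)))
   - (\<Sum>t\<in>{H+1..T}. c t (traj n m N A B K H (P(i := (\<lambda>_. Ms))) w t)
                         (dac_act n H (K i) Ms w t (traj n m N A B K H (P(i := (\<lambda>_. Ms))) w t)))"

end

theory Submission
  imports Defs "HOL-Analysis.L2_Norm"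
begin

text \<open>Under the closed loop \<open>x\<^sub>t\<^sub>+\<^sub>1 = A\<^sub>K x\<^sub>t + z\<^sub>t\<close>, where \<open>z\<^sub>t\<close> collects the disturbance and
  the disturbance-feedback parts of all actions, the state is \<open>\<Sum>\<^sub>k A\<^sub>K\<^sup>k z\<^sub>t\<^sub>-\<^sub>1\<^sub>-\<^sub>k\<close>, and the ideal
  state is exactly the part with \<open>k \<le> H\<close>. Strong stability makes the rest
  \<open>O(\<kappa>\<^sup>2 (1-\<gamma>)\<^sup>H\<^sup>+\<^sup>1)\<close>, which the choice of \<open>H\<close> turns into \<open>O(1/\<surd>T)\<close> per round.
  The ideal loss is Lipschitz in agent \<open>i\<close>'s parameters, so projected online gradient descent
  has regret \<open>O(\<surd>T)\<close> on it, and since consecutive parameters differ by \<open>O(\<eta>)\<close>, the ideal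
  loss at the played parameters differs from the incurred cost by \<open>O(H \<eta>)\<close> per round.
  All constants are polynomial in the problem parameters and in \<open>H = O(log (N T))\<close>.\<close>

section \<open>Vectors and matrices with explicit dimensions\<close>

lemma vnorm_eq_L2_set: "vnorm r x = L2_set x {..<r}"
  by (simp add: vnorm_def L2_set_def)

lemma vnorm_nonneg [simp]: "0 \<le> vnorm r x"
  by (simp add: vnorm_eq_L2_set)

lemma vnorm_zero [simp]: "vnorm r 0 = 0"
  by (simp add: vnorm_def)

lemma vnorm_zero_fun [simp]: "vnorm r (\<lambda>a. 0) = 0"
  by (simp add: vnorm_def)

lemma vnorm_uminus [simp]: "vnorm r (- x) = vnorm r x"
  by (simp add: vnorm_def)

lemma vnorm_add_le: "vnorm r (x + y) \<le> vnorm r x + vnorm r y"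
  using L2_set_triangle_ineq[of x y "{..<r}"] by (simp add: vnorm_eq_L2_set plus_fun_def)

lemma vnorm_diff_commute: "vnorm r (x - y) = vnorm r (y - x)"
  by (metis minus_diff_eq vnorm_uminus)

lemma vnorm_triangle: "vnorm r (x - z) \<le> vnorm r (x - y) + vnorm r (y - z)"
  using vnorm_add_le[of r "x - y" "y - z"] by simp

lemma vnorm_sum_le: "vnorm r (\<Sum>j\<in>S. f j) \<le> (\<Sum>j\<in>S. vnorm r (f j))"
proof (induction S rule: infinite_finite_induct)
  case (insert a F)
  have "vnorm r (sum f (insert a F)) \<le> vnorm r (f a) + vnorm r (sum f F)"
    unfolding sum.insert[OF insert(1,2)] by (rule vnorm_add_le)
  then show ?case using insert.IH unfolding sum.insert[OF insert(1,2)] by linarith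
qed auto

lemma vnorm_scale: "vnorm r (\<lambda>a. s * x a) = \<bar>s\<bar> * vnorm r x"
  unfolding vnorm_eq_L2_set using L2_set_right_distrib[of "\<bar>s\<bar>" x "{..<r}"]
  by (simp add: L2_set_def power_mult_distrib)

lemma vnorm_cong: "(\<And>a. a < r \<Longrightarrow> x a = y a) \<Longrightarrow> vnorm r x = vnorm r y"
  by (simp add: vnorm_def)

lemma vnorm_eq_0D: "vnorm r x = 0 \<Longrightarrow> a < r \<Longrightarrow> x a = 0"
  unfolding vnorm_eq_L2_set by (simp add: L2_set_eq_0_iff)

lemma sum_fun_apply: "(\<Sum>j\<in>S. f j) x = (\<Sum>j\<in>S. f j x)"
  by (induction S rule: infinite_finite_induct) auto

lemma mv_cong: "(\<And>b. b < c \<Longrightarrow> x b = y b) \<Longrightarrow> mv c X x = mv c X y"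
  by (simp add: mv_def)

lemma mv_zero [simp]: "mv c X 0 = 0"
  by (simp add: mv_def fun_eq_iff)

lemma mv_zero_fun [simp]: "mv c X (\<lambda>a. 0) = (\<lambda>a. 0)"
  by (simp add: mv_def)

lemma mv_add: "mv c X (x + y) = mv c X x + mv c X y"
  by (simp add: mv_def fun_eq_iff algebra_simps sum.distrib)

lemma mv_diff: "mv c X (x - y) = mv c X x - mv c X y"
  by (simp add: mv_def fun_eq_iff algebra_simps sum_subtractf)

lemma mv_sum: "mv c X (\<Sum>j\<in>S. f j) = (\<Sum>j\<in>S. mv c X (f j))"
proof (induction S rule: infinite_finite_induct)
  case (insert a F)
  show ?case unfolding sum.insert[OF insert(1,2)] mv_add insert.IH ..
qed auto

lemma mv_scale: "mv c X (\<lambda>b. s * x b) = (\<lambda>a. s * mv c X x a)"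
  by (simp add: mv_def fun_eq_iff algebra_simps sum_distrib_left)

lemma mv_mat_diff: "mv c (X - Y) x = mv c X x - mv c Y x"
  by (simp add: mv_def fun_eq_iff algebra_simps sum_subtractf)

lemma mv_mm: "mv n (mm n X Y) v = mv n X (mv n Y v)"
  unfolding mv_def mm_def
  by (rule ext) (simp add: sum_distrib_left sum_distrib_right mult.assoc, rule sum.swap)

lemma mv_mm_identity:
  assumes "\<forall>a<n. \<forall>b<n. mm n X Y a b = (if a = b then 1 else 0)" and "a < n"
  shows "mv n X (mv n Y z) a = z a"
proof -
  have "mv n X (mv n Y z) a = mv n (mm n X Y) z a" by (simp add: mv_mm)
  also have "\<dots> = (\<Sum>b<n. (if a = b then 1 else 0) * z b)"
    unfolding mv_def using assms by (intro sum.cong) auto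
  also have "\<dots> = (\<Sum>b<n. if a = b then z b else 0)" by (rule sum.cong) auto
  also have "\<dots> = z a" using assms(2) by (simp add: sum.delta)
  finally show ?thesis .
qed

definition mat_frob :: "nat \<Rightarrow> nat \<Rightarrow> mat \<Rightarrow> real" where
  "mat_frob r c X = sqrt (\<Sum>a<r. \<Sum>b<c. (X a b)^2)"

lemma mat_frob_nonneg [simp]: "0 \<le> mat_frob r c X"
  by (simp add: mat_frob_def sum_nonneg)

lemma vnorm_mv_le_mat_frob: "vnorm r (mv c X x) \<le> mat_frob r c X * vnorm c x"
proof -
  have row: "(mv c X x a)^2 \<le> (\<Sum>b<c. (X a b)^2) * (\<Sum>b<c. (x b)^2)" for a
  proof -
    have "\<bar>mv c X x a\<bar> \<le> (\<Sum>b<c. \<bar>X a b\<bar> * \<bar>x b\<bar>)"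
      unfolding mv_def by (rule order_trans[OF sum_abs]) (simp add: abs_mult)
    also have "\<dots> \<le> L2_set (X a) {..<c} * L2_set x {..<c}"
      by (rule L2_set_mult_ineq)
    finally have "(mv c X x a)^2 \<le> (L2_set (X a) {..<c} * L2_set x {..<c})^2"
      by (metis abs_ge_zero power2_abs power_mono)
    also have "\<dots> = (\<Sum>b<c. (X a b)^2) * (\<Sum>b<c. (x b)^2)"
      by (simp add: L2_set_def power_mult_distrib sum_nonneg)
    finally show ?thesis .
  qed
  have "(\<Sum>a<r. (mv c X x a)^2) \<le> (\<Sum>a<r. (\<Sum>b<c. (X a b)^2) * (\<Sum>b<c. (x b)^2))"
    by (intro sum_mono row)
  also have "\<dots> = (\<Sum>a<r. \<Sum>b<c. (X a b)^2) * (\<Sum>b<c. (x b)^2)"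
    by (simp add: sum_distrib_right)
  finally
  show ?thesis
    unfolding vnorm_def mat_frob_def real_sqrt_mult[symmetric] by (rule real_sqrt_le_mono)
qed

lemma vnorm_mv_le_of_unit_ball:
  assumes "\<And>x. vnorm c x \<le> 1 \<Longrightarrow> vnorm r (mv c X x) \<le> C"
  shows "vnorm r (mv c X x) \<le> C * vnorm c x"
proof (cases "vnorm c x = 0")
  case True
  then have "mv c X x = mv c X 0" by (intro mv_cong) (simp add: vnorm_eq_0D)
  then show ?thesis using True by simp
next
  case False
  define \<nu> where "\<nu> = vnorm c x"
  have pos: "\<nu> > 0" using False vnorm_nonneg[of c x] unfolding \<nu>_def by linarith
  have "vnorm c (\<lambda>b. (1/\<nu>) * x b) = 1"
    using pos vnorm_scale[of c "1/\<nu>" x] by (simp add: \<nu>_def[symmetric])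
  then have "vnorm r (mv c X (\<lambda>b. (1/\<nu>) * x b)) \<le> C" by (intro assms) simp
  moreover have "vnorm r (mv c X (\<lambda>b. (1/\<nu>) * x b)) = (1/\<nu>) * vnorm r (mv c X x)"
    unfolding mv_scale vnorm_scale using pos by simp
  ultimately have "(1/\<nu>) * vnorm r (mv c X x) \<le> C" by simp
  then show ?thesis using pos unfolding \<nu>_def[symmetric] by (simp add: field_simps)
qed

lemma opnorm_bdd: "bdd_above {vnorm r (mv c X x) | x. vnorm c x \<le> 1}"
proof (rule bdd_aboveI)
  fix y assume "y \<in> {vnorm r (mv c X x) | x. vnorm c x \<le> 1}"
  then obtain x where "y = vnorm r (mv c X x)" "vnorm c x \<le> 1" by auto
  then show "y \<le> mat_frob r c X"
    using vnorm_mv_le_mat_frob[of r c X x] mat_frob_nonneg[of r c X]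
    by (metis mult_left_le order_trans)
qed

lemma opnorm_upper: "vnorm c x \<le> 1 \<Longrightarrow> vnorm r (mv c X x) \<le> opnorm r c X"
  unfolding opnorm_def by (rule cSup_upper[OF _ opnorm_bdd]) auto

lemma opnorm_nonneg [simp]: "0 \<le> opnorm r c X"
  using opnorm_upper[of c 0 r X] by simp

lemma vnorm_mv_le_opnorm: "vnorm r (mv c X x) \<le> opnorm r c X * vnorm c x"
  by (rule vnorm_mv_le_of_unit_ball) (rule opnorm_upper)

lemma column_sumsq_le_opnorm:
  assumes "b < c"
  shows "(\<Sum>a<r. (X a b)^2) \<le> (opnorm r c X)^2"
proof -
  define e where "e = (\<lambda>l::nat. if l = b then (1::real) else 0)"
  have "vnorm c e = 1" using assms
    by (simp add: vnorm_def e_def if_distrib[of "\<lambda>x. x^2"] sum.If_cases lessThan_def)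
  moreover have "mv c X e = (\<lambda>a. X a b)" using assms
    by (simp add: mv_def e_def fun_eq_iff if_distrib[of "\<lambda>x. _ * x"] sum.If_cases lessThan_def)
  ultimately have "vnorm r (\<lambda>a. X a b) \<le> opnorm r c X"
    using opnorm_upper[of c e r X] by simp
  then have "(vnorm r (\<lambda>a. X a b))^2 \<le> (opnorm r c X)^2"
    by (simp add: power_mono)
  then show ?thesis by (simp add: vnorm_def sum_nonneg)
qed

lemma sumsq_le_opnorm: "(\<Sum>a<r. \<Sum>b<c. (X a b)^2) \<le> real c * (opnorm r c X)^2"
proof -
  have "(\<Sum>a<r. \<Sum>b<c. (X a b)^2) = (\<Sum>b<c. \<Sum>a<r. (X a b)^2)" by (rule sum.swap)
  also have "\<dots> \<le> (\<Sum>b<c. (opnorm r c X)^2)" by (intro sum_mono column_sumsq_le_opnorm) simp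
  finally show ?thesis by simp
qed

lemma opnorm_segment_le:
  assumes "0 \<le> \<theta>" "\<theta> \<le> 1"
  shows "opnorm r c (\<lambda>a b. X a b + \<theta> * (Y a b - X a b))
           \<le> (1 - \<theta>) * opnorm r c X + \<theta> * opnorm r c Y"
  unfolding opnorm_def[of r c "\<lambda>a b. X a b + \<theta> * (Y a b - X a b)"]
proof (rule cSup_least)
  show "{vnorm r (mv c (\<lambda>a b. X a b + \<theta> * (Y a b - X a b)) x) |x. vnorm c x \<le> 1} \<noteq> {}"
  proof -
    have "vnorm c (0::vec) \<le> 1" by simp
    then show ?thesis by blast
  qed
next
  fix y assume "y \<in> {vnorm r (mv c (\<lambda>a b. X a b + \<theta> * (Y a b - X a b)) x) |x. vnorm c x \<le> 1}"
  then obtain x where y: "y = vnorm r (mv c (\<lambda>a b. X a b + \<theta> * (Y a b - X a b)) x)"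
    and x: "vnorm c x \<le> 1" by auto
  have "mv c (\<lambda>a b. X a b + \<theta> * (Y a b - X a b)) x
      = (\<lambda>a. (1-\<theta>) * mv c X x a) + (\<lambda>a. \<theta> * mv c Y x a)"
    by (simp add: mv_def fun_eq_iff algebra_simps sum.distrib sum_distrib_left sum_subtractf)
  then have "y \<le> vnorm r (\<lambda>a. (1-\<theta>) * mv c X x a) + vnorm r (\<lambda>a. \<theta> * mv c Y x a)"
    unfolding y by (simp only: vnorm_add_le)
  also have "\<dots> = (1-\<theta>) * vnorm r (mv c X x) + \<theta> * vnorm r (mv c Y x)"
    using assms by (simp add: vnorm_scale)
  also have "\<dots> \<le> (1-\<theta>) * opnorm r c X + \<theta> * opnorm r c Y"
    using assms opnorm_upper[OF x, of r X] opnorm_upper[OF x, of r Y]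
    by (intro add_mono mult_left_mono) auto
  finally show "y \<le> (1-\<theta>) * opnorm r c X + \<theta> * opnorm r c Y" .
qed

lemma funpow_mv_add: "(mv c X ^^ k) (x + y) = (mv c X ^^ k) x + (mv c X ^^ k) y"
  by (induction k) (simp_all only: funpow.simps comp_apply mv_add id_apply)

lemma funpow_mv_diff: "(mv c X ^^ k) (x - y) = (mv c X ^^ k) x - (mv c X ^^ k) y"
  by (induction k) (simp_all only: funpow.simps comp_apply mv_diff id_apply)

lemma funpow_mv_zero [simp]: "(mv c X ^^ k) 0 = 0"
  by (induction k) simp_all

lemma funpow_mv_sum: "(mv c X ^^ k) (\<Sum>j\<in>S. f j) = (\<Sum>j\<in>S. (mv c X ^^ k) (f j))"
  by (induction k) (simp_all add: mv_sum)

lemma vnorm_funpow_mv_le: "vnorm n ((mv n L ^^ k) v) \<le> opnorm n n L ^ k * vnorm n v"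
proof (induction k)
  case (Suc k)
  have "vnorm n ((mv n L ^^ Suc k) v) \<le> opnorm n n L * vnorm n ((mv n L ^^ k) v)"
    using vnorm_mv_le_opnorm by simp
  also have "\<dots> \<le> opnorm n n L * (opnorm n n L ^ k * vnorm n v)"
    by (rule mult_left_mono[OF Suc]) simp
  finally show ?case by (simp add: mult.assoc)
qed simp

lemma geometric_sum_le_inverse:
  fixes \<gamma> :: real
  assumes "0 < \<gamma>" "\<gamma> \<le> 1"
  shows "(\<Sum>k<h. (1-\<gamma>)^k) \<le> 1/\<gamma>"
proof -
  have "(\<Sum>k<h. (1-\<gamma>)^k) = (1 - (1-\<gamma>)^h) / \<gamma>" using assms by (simp add: sum_gp_strict)
  also have "\<dots> \<le> 1/\<gamma>" using assms by (intro divide_right_mono) auto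
  finally show ?thesis .
qed

lemma geometric_sum_from_1_le_inverse:
  fixes \<gamma> :: real
  assumes "0 < \<gamma>" "\<gamma> \<le> 1"
  shows "(\<Sum>p\<in>{1..h}. (1-\<gamma>)^p) \<le> 1/\<gamma>"
proof -
  have "(\<Sum>p\<in>{1..h}. (1-\<gamma>)^p) \<le> (\<Sum>p<Suc h. (1-\<gamma>)^p)"
    using assms by (intro sum_mono2) auto
  then show ?thesis using geometric_sum_le_inverse[OF assms, of "Suc h"] by linarith
qed

section \<open>Strong stability and the closed loop\<close>

lemma strongly_stable_gamma_le_1:
  assumes "glob_strongly_stable n m N A B K \<kappa> \<gamma>"
  shows "\<gamma> \<le> 1"
  using assms opnorm_nonneg unfolding glob_strongly_stable_def
  by (meson diff_ge_0_iff_ge order_trans)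

lemma funpow_mv_similar:
  assumes QQi: "\<forall>a<n. \<forall>b<n. mm n Q Qi a b = (if a = b then 1 else 0)"
    and QiQ: "\<forall>a<n. \<forall>b<n. mm n Qi Q a b = (if a = b then 1 else 0)"
    and X_eq: "\<forall>a<n. \<forall>b<n. X a b = mm n (mm n Q L) Qi a b"
  shows "a < n \<Longrightarrow> (mv n X ^^ k) x a = mv n Q ((mv n L ^^ k) (mv n Qi x)) a"
proof (induction k arbitrary: a)
  case 0
  then show ?case using mv_mm_identity[OF QQi] by simp
next
  case (Suc k)
  define z where "z = (mv n L ^^ k) (mv n Qi x)"
  have "(mv n X ^^ Suc k) x a = mv n X (mv n Q z) a"
    using Suc.IH unfolding z_def by (simp add: mv_cong[of n "(mv n X ^^ k) x"])
  also have "\<dots> = mv n (mm n (mm n Q L) Qi) (mv n Q z) a"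
    unfolding mv_def using X_eq Suc.prems by (intro sum.cong) auto
  also have "\<dots> = mv n Q (mv n L (mv n Qi (mv n Q z))) a" by (simp add: mv_mm)
  also have "\<dots> = mv n Q (mv n L z) a"
    using mv_mm_identity[OF QiQ] by (simp add: mv_cong[of n "mv n Qi (mv n Q z)" z])
  finally show ?case by (simp add: z_def)
qed

lemma strongly_stable_AK_pow_le:
  assumes "glob_strongly_stable n m N A B K \<kappa> \<gamma>"
  shows "vnorm n ((mv n (AK m N A B K) ^^ k) x) \<le> \<kappa> * (1-\<gamma>)^k * vnorm n x"
proof -
  obtain Q Qi L where QQi: "\<forall>a<n. \<forall>b<n. mm n Q Qi a b = (if a = b then 1 else 0)"
     and QiQ: "\<forall>a<n. \<forall>b<n. mm n Qi Q a b = (if a = b then 1 else 0)"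
     and AK_eq: "\<forall>a<n. \<forall>b<n. AK m N A B K a b = mm n (mm n Q L) Qi a b"
     and L_le: "opnorm n n L \<le> 1 - \<gamma>"
     and Q_le: "opnorm n n Q * opnorm n n Qi \<le> \<kappa>"
    using assms unfolding glob_strongly_stable_def by blast
  have "vnorm n ((mv n (AK m N A B K) ^^ k) x) = vnorm n (mv n Q ((mv n L ^^ k) (mv n Qi x)))"
    using funpow_mv_similar[OF QQi QiQ AK_eq] by (intro vnorm_cong) auto
  also have "\<dots> \<le> opnorm n n Q * (opnorm n n L ^ k * (opnorm n n Qi * vnorm n x))"
    using vnorm_mv_le_opnorm[of n n Q] vnorm_funpow_mv_le[of n k L] vnorm_mv_le_opnorm[of n n Qi x]
    by (meson mult_left_mono opnorm_nonneg order_trans zero_le_power)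
  also have "\<dots> = (opnorm n n Q * opnorm n n Qi) * opnorm n n L ^ k * vnorm n x" by simp
  also have "\<dots> \<le> \<kappa> * (1-\<gamma>)^k * vnorm n x"
    using Q_le L_le order_trans[OF mult_nonneg_nonneg[OF opnorm_nonneg opnorm_nonneg] Q_le]
    by (intro mult_right_mono mult_mono power_mono) auto
  finally show ?thesis .
qed

lemma strongly_stable_K_le:
  assumes "glob_strongly_stable n m N A B K \<kappa> \<gamma>" and "j < N"
  shows "vnorm (m j) (mv n (K j) x) \<le> \<kappa> * vnorm n x"
proof (rule vnorm_mv_le_of_unit_ball)
  fix x :: vec assume x: "vnorm n x \<le> 1"
  have bdd: "bdd_above {sqrt (\<Sum>j<N. (vnorm (m j) (mv n (K j) x))^2) | x. vnorm n x \<le> 1}"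
  proof (rule bdd_aboveI)
    fix y assume "y \<in> {sqrt (\<Sum>j<N. (vnorm (m j) (mv n (K j) x))^2) | x. vnorm n x \<le> 1}"
    then obtain x where y: "y = sqrt (\<Sum>j<N. (vnorm (m j) (mv n (K j) x))^2)"
      and x: "vnorm n x \<le> 1" by auto
    have "vnorm (m j) (mv n (K j) x) \<le> mat_frob (m j) n (K j)" for j
      using vnorm_mv_le_mat_frob[of "m j" n "K j" x] x mat_frob_nonneg[of "m j" n "K j"]
      by (metis mult_left_le order_trans)
    then show "y \<le> sqrt (\<Sum>j<N. (mat_frob (m j) n (K j))^2)"
      unfolding y by (intro real_sqrt_le_mono sum_mono power_mono) auto
  qed
  have "vnorm (m j) (mv n (K j) x) \<le> L2_set (\<lambda>j. vnorm (m j) (mv n (K j) x)) {..<N}"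
    using assms(2) by (intro member_le_L2_set) auto
  also have "\<dots> \<le> stack_opnorm n m N K"
    unfolding stack_opnorm_def L2_set_def using x by (intro cSup_upper[OF _ bdd]) auto
  also have "\<dots> \<le> \<kappa>" using assms(1) unfolding glob_strongly_stable_def by simp
  finally show "vnorm (m j) (mv n (K j) x) \<le> \<kappa>" .
qed

lemma mv_AK: "mv n (AK m N A B K) x = mv n A x - (\<Sum>j<N. mv (m j) (B j) (mv n (K j) x))"
proof (rule ext)
  fix a
  have "mv n (AK m N A B K) x a
      = (\<Sum>b<n. A a b * x b) - (\<Sum>b<n. \<Sum>j<N. \<Sum>l<m j. B j a l * K j l b * x b)"
    by (simp add: mv_def AK_def left_diff_distrib sum_subtractf sum_distrib_right)
  also have "(\<Sum>b<n. \<Sum>j<N. \<Sum>l<m j. B j a l * K j l b * x b)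
      = (\<Sum>j<N. \<Sum>l<m j. \<Sum>b<n. B j a l * K j l b * x b)"
    by (subst sum.swap) (rule sum.cong[OF refl], rule sum.swap)
  also have "\<dots> = (\<Sum>j<N. \<Sum>l<m j. B j a l * (\<Sum>b<n. K j l b * x b))"
    by (simp add: sum_distrib_left mult.assoc)
  finally show "mv n (AK m N A B K) x a = (mv n A x - (\<Sum>j<N. mv (m j) (B j) (mv n (K j) x))) a"
    by (simp add: mv_def sum_fun_apply)
qed

locale stable_system =
  fixes n :: nat and m :: "nat \<Rightarrow> nat" and N :: nat and A :: mat and B :: "nat \<Rightarrow> mat"
    and K :: "nat \<Rightarrow> mat" and H :: nat and w :: "nat \<Rightarrow> vec"
    and \<kappa> \<gamma> W \<beta> :: real
  assumes strongly_stable: "glob_strongly_stable n m N A B K \<kappa> \<gamma>"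
    and gamma_pos: "0 < \<gamma>" and kappa_ge_1: "1 \<le> \<kappa>"
    and w_le: "\<And>t. vnorm n (w t) \<le> W"
    and B_le: "\<And>j. j < N \<Longrightarrow> opnorm n (m j) (B j) \<le> \<beta>"
begin

abbreviation AKpow :: "nat \<Rightarrow> vec \<Rightarrow> vec" where
  "AKpow k \<equiv> mv n (AK m N A B K) ^^ k"

abbreviation state :: "(nat \<Rightarrow> nat \<Rightarrow> nat \<Rightarrow> mat) \<Rightarrow> nat \<Rightarrow> vec" where
  "state Q \<equiv> traj n m N A B K H Q w"

definition dac_offset :: "(nat \<Rightarrow> nat \<Rightarrow> nat \<Rightarrow> mat) \<Rightarrow> nat \<Rightarrow> nat \<Rightarrow> vec" where
  "dac_offset Q j s = (\<Sum>p\<in>{1..H}. mv n (Q j s (p - 1)) (wp w s p))"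

definition drive :: "(nat \<Rightarrow> nat \<Rightarrow> nat \<Rightarrow> mat) \<Rightarrow> nat \<Rightarrow> vec" where
  "drive Q s = (\<Sum>j<N. mv (m j) (B j) (dac_offset Q j s)) + w s"

lemma gamma_le_1: "\<gamma> \<le> 1"
  using strongly_stable_gamma_le_1[OF strongly_stable] .

lemma W_nonneg: "0 \<le> W"
  using w_le[of 0] vnorm_nonneg[of n "w 0"] by linarith

lemma beta_nonneg: "0 < N \<Longrightarrow> 0 \<le> \<beta>"
  using B_le[of 0] opnorm_nonneg[of n "m 0" "B 0"] by linarith

lemma wp_le: "vnorm n (wp w t p) \<le> W"
  unfolding wp_def using w_le W_nonneg by auto

lemma AKpow_le: "vnorm n (AKpow k x) \<le> \<kappa> * (1-\<gamma>)^k * vnorm n x"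
  by (rule strongly_stable_AK_pow_le[OF strongly_stable])

lemma AKpow_le_kappa: "vnorm n (AKpow k x) \<le> \<kappa> * vnorm n x"
proof -
  have "(1-\<gamma>)^k \<le> 1" using gamma_pos gamma_le_1 by (intro power_le_one) auto
  then have "\<kappa> * (1-\<gamma>)^k * vnorm n x \<le> \<kappa> * vnorm n x" using kappa_ge_1
    by (intro mult_right_mono) (auto intro: mult_left_le)
  then show ?thesis using AKpow_le[of k x] by linarith
qed

lemma state_Suc: "state Q (Suc s) = AKpow 1 (state Q s) + drive Q s"
proof -
  define x where "x = state Q s"
  have "state Q (Suc s)
      = mv n A x + (\<Sum>j<N. mv (m j) (B j) (- mv n (K j) x + dac_offset Q j s)) + w s"
    by (simp add: x_def dac_offset_def dac_act_def)
  also have "(\<Sum>j<N. mv (m j) (B j) (- mv n (K j) x + dac_offset Q j s))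
      = (\<Sum>j<N. mv (m j) (B j) (dac_offset Q j s)) - (\<Sum>j<N. mv (m j) (B j) (mv n (K j) x))"
    by (simp add: mv_add mv_diff sum_subtractf sum.distrib)
  finally show ?thesis unfolding mv_AK drive_def x_def[symmetric]
    by (simp only: fun_eq_iff plus_fun_apply minus_apply) (simp add: algebra_simps)
qed

lemma state_unroll:
  "h + 1 \<le> t \<Longrightarrow> state Q t = AKpow (h+1) (state Q (t-h-1)) + (\<Sum>k\<le>h. AKpow k (drive Q (t-1-k)))"
proof (induction h arbitrary: t)
  case 0
  then obtain s where t: "t = Suc s" by (cases t) auto
  show ?case unfolding t state_Suc by simp
next
  case (Suc h)
  have IH: "state Q t = AKpow (h+1) (state Q (t-h-1)) + (\<Sum>k\<le>h. AKpow k (drive Q (t-1-k)))"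
    using Suc.prems by (intro Suc.IH) simp
  have e: "t - h - 1 = Suc (t - 1 - Suc h)" using Suc.prems by simp
  have "AKpow (h+1) (state Q (t-h-1))
      = AKpow (Suc h + 1) (state Q (t - 1 - Suc h)) + AKpow (Suc h) (drive Q (t - 1 - Suc h))"
    unfolding e state_Suc funpow_mv_add by (simp add: funpow_Suc_right del: funpow.simps)
  then show ?case unfolding IH sum.atMost_Suc by (simp add: ac_simps)
qed

lemma state_eq_sum: "state Q t = (\<Sum>k<t. AKpow k (drive Q (t-1-k)))"
proof (cases t)
  case (Suc s)
  then show ?thesis using state_unroll[of s t Q] by (simp add: lessThan_Suc_atMost)
qed simp

lemma state_le:
  assumes "\<And>s. vnorm n (drive Q s) \<le> Z"
  shows "vnorm n (state Q t) \<le> \<kappa> * Z / \<gamma>"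
proof -
  have Z: "0 \<le> Z" using assms[of 0] vnorm_nonneg[of n "drive Q 0"] by linarith
  have "vnorm n (state Q t) \<le> (\<Sum>k<t. vnorm n (AKpow k (drive Q (t-1-k))))"
    unfolding state_eq_sum by (rule vnorm_sum_le)
  also have "\<dots> \<le> (\<Sum>k<t. \<kappa> * (1-\<gamma>)^k * Z)"
  proof (rule sum_mono)
    fix k
    have "0 \<le> \<kappa> * (1-\<gamma>)^k" using kappa_ge_1 gamma_le_1 by simp
    then show "vnorm n (AKpow k (drive Q (t-1-k))) \<le> \<kappa> * (1-\<gamma>)^k * Z"
      using AKpow_le assms by (meson mult_left_mono order_trans)
  qed
  also have "\<dots> = \<kappa> * Z * (\<Sum>k<t. (1-\<gamma>)^k)" by (simp add: sum_distrib_left mult_ac)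
  also have "\<dots> \<le> \<kappa> * Z * (1/\<gamma>)"
    using kappa_ge_1 Z gamma_pos gamma_le_1 by (intro mult_left_mono geometric_sum_le_inverse) auto
  finally show ?thesis by simp
qed

lemma dac_offset_le:
  assumes "Q j s \<in> calM n (m j) H \<kappa> \<gamma>"
  shows "vnorm (m j) (dac_offset Q j s) \<le> 2 * \<kappa>^2 * W / \<gamma>"
proof -
  have "vnorm (m j) (dac_offset Q j s) \<le> (\<Sum>p\<in>{1..H}. vnorm (m j) (mv n (Q j s (p - 1)) (wp w s p)))"
    unfolding dac_offset_def by (rule vnorm_sum_le)
  also have "\<dots> \<le> (\<Sum>p\<in>{1..H}. 2 * \<kappa>^2 * W * (1-\<gamma>)^p)"
  proof (rule sum_mono)
    fix p assume p: "p \<in> {1..H}"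
    have "vnorm (m j) (mv n (Q j s (p - 1)) (wp w s p)) \<le> opnorm (m j) n (Q j s (p - 1)) * W"
      using vnorm_mv_le_opnorm[of "m j" n "Q j s (p - 1)" "wp w s p"]
        mult_left_mono[OF wp_le[of s p] opnorm_nonneg[of "m j" n "Q j s (p - 1)"]]
      by linarith
    also have "\<dots> \<le> 2 * \<kappa>^2 * (1-\<gamma>)^p * W"
      using assms p W_nonneg unfolding calM_def by (intro mult_right_mono) auto
    finally show "vnorm (m j) (mv n (Q j s (p - 1)) (wp w s p)) \<le> 2 * \<kappa>^2 * W * (1-\<gamma>)^p"
      by (simp add: mult_ac)
  qed
  also have "\<dots> = 2 * \<kappa>^2 * W * (\<Sum>p\<in>{1..H}. (1-\<gamma>)^p)" by (simp add: sum_distrib_left)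
  also have "\<dots> \<le> 2 * \<kappa>^2 * W * (1/\<gamma>)"
    using W_nonneg gamma_pos gamma_le_1
    by (intro mult_left_mono geometric_sum_from_1_le_inverse) auto
  finally show ?thesis by simp
qed

definition drive_const :: real where
  "drive_const = W + real N * (\<beta> * (2 * \<kappa>^2 * W / \<gamma>))"

lemma drive_le:
  assumes "\<And>j. j < N \<Longrightarrow> Q j s \<in> calM n (m j) H \<kappa> \<gamma>"
  shows "vnorm n (drive Q s) \<le> drive_const"
proof -
  have "vnorm n (\<Sum>j<N. mv (m j) (B j) (dac_offset Q j s))
      \<le> (\<Sum>j<N. vnorm n (mv (m j) (B j) (dac_offset Q j s)))"
    by (rule vnorm_sum_le)
  also have "\<dots> \<le> (\<Sum>j<N. \<beta> * (2 * \<kappa>^2 * W / \<gamma>))"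
  proof (rule sum_mono)
    fix j assume j: "j \<in> {..<N}"
    have "vnorm n (mv (m j) (B j) (dac_offset Q j s)) \<le> opnorm n (m j) (B j) * vnorm (m j) (dac_offset Q j s)"
      by (rule vnorm_mv_le_opnorm)
    also have "\<dots> \<le> \<beta> * (2 * \<kappa>^2 * W / \<gamma>)"
      using B_le[of j] j dac_offset_le[of Q j s] assms[of j] beta_nonneg by (intro mult_mono) auto
    finally show "vnorm n (mv (m j) (B j) (dac_offset Q j s)) \<le> \<beta> * (2 * \<kappa>^2 * W / \<gamma>)" .
  qed
  finally show ?thesis
    unfolding drive_def drive_const_def
    using vnorm_add_le[of n "\<Sum>j<N. mv (m j) (B j) (dac_offset Q j s)" "w s"] w_le[of s] by simp
qed

end

lemma sum_window_shift:
  fixes f :: "nat \<Rightarrow> 'a::comm_monoid_add"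
  assumes "k \<le> H"
  shows "(\<Sum>l\<in>{0..2*H}. if k < l \<and> l - k \<le> H then f l else 0) = (\<Sum>p\<in>{1..H}. f (p + k))"
proof -
  have "(\<Sum>l\<in>{0..2*H}. if k < l \<and> l - k \<le> H then f l else 0)
      = (\<Sum>l\<in>{l\<in>{0..2*H}. k < l \<and> l - k \<le> H}. f l)"
    by (rule sum.inter_filter[symmetric]) simp
  also have "{l\<in>{0..2*H}. k < l \<and> l - k \<le> H} = {1+k..H+k}" using assms by auto
  also have "(\<Sum>l\<in>{1+k..H+k}. f l) = (\<Sum>p\<in>{1..H}. f (p + k))"
    by (rule sum.shift_bounds_cl_nat_ivl)
  finally show ?thesis .
qed

context stable_system
begin

text \<open>The summand of the ideal state through which the parameters of time \<open>t-1-k\<close> act on the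
  disturbance \<open>w\<^sub>t\<^sub>-\<^sub>1\<^sub>-\<^sub>l\<close>: the \<open>k\<close>-th term of the transfer matrix \<open>\<Psi>\<^sup>H\<^sub>t\<^sub>-\<^sub>1\<^sub>,\<^sub>l\<close>.\<close>
definition feedback_term :: "(nat \<Rightarrow> nat \<Rightarrow> nat \<Rightarrow> mat) \<Rightarrow> nat \<Rightarrow> nat \<Rightarrow> nat \<Rightarrow> vec" where
  "feedback_term Q t k l = (if k < l \<and> l - k \<le> H then
     AKpow k (\<Sum>j<N. mv (m j) (B j) (mv n (Q j (t - 1 - k) (l - k - 1)) (wp w t (Suc l))))
   else 0)"

lemma ideal_state_eq:
  "ideal_state n m N A B K H Q w t = (\<Sum>l\<in>{0..2*H}.
     (if l \<le> H then AKpow l (wp w t (Suc l)) else 0) + (\<Sum>k\<in>{0..H}. feedback_term Q t k l))"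
  unfolding ideal_state_def feedback_term_def ..

lemma sum_feedback_term:
  assumes k: "k \<le> H" and t: "H + 1 \<le> t"
  shows "(\<Sum>l\<in>{0..2*H}. feedback_term Q t k l) = AKpow k (\<Sum>j<N. mv (m j) (B j) (dac_offset Q j (t-1-k)))"
proof -
  have shift: "wp w t (Suc (p + k)) = wp w (t-1-k) p" for p
    using k t unfolding wp_def by (auto simp: add.commute)
  have "(\<Sum>p\<in>{1..H}. AKpow k (\<Sum>j<N. mv (m j) (B j)
        (mv n (Q j (t - 1 - k) (p + k - k - 1)) (wp w t (Suc (p + k))))))
      = AKpow k (\<Sum>p\<in>{1..H}. \<Sum>j<N. mv (m j) (B j) (mv n (Q j (t-1-k) (p - 1)) (wp w (t-1-k) p)))"
    by (simp add: shift funpow_mv_sum)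
  also have "\<dots> = AKpow k (\<Sum>j<N. mv (m j) (B j) (dac_offset Q j (t-1-k)))"
    unfolding dac_offset_def mv_sum by (subst sum.swap) (rule refl)
  finally show ?thesis unfolding feedback_term_def sum_window_shift[OF k] .
qed

lemma ideal_state_eq_truncated_unroll:
  assumes t: "H + 1 \<le> t"
  shows "ideal_state n m N A B K H Q w t = (\<Sum>k\<le>H. AKpow k (drive Q (t-1-k)))"
proof -
  have "(\<Sum>l\<in>{0..2*H}. if l \<le> H then AKpow l (wp w t (Suc l)) else 0)
      = (\<Sum>l\<in>{l\<in>{0..2*H}. l \<le> H}. AKpow l (wp w t (Suc l)))"
    by (rule sum.inter_filter[symmetric]) simp
  also have "{l\<in>{0..2*H}. l \<le> H} = {..H}" by auto
  finally have disturbance: "(\<Sum>l\<in>{0..2*H}. if l \<le> H then AKpow l (wp w t (Suc l)) else 0)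
      = (\<Sum>k\<le>H. AKpow k (w (t-1-k)))"
    using t by (simp add: wp_def)
  have "ideal_state n m N A B K H Q w t
      = (\<Sum>k\<le>H. AKpow k (w (t-1-k))) + (\<Sum>k\<in>{0..H}. \<Sum>l\<in>{0..2*H}. feedback_term Q t k l)"
    unfolding ideal_state_eq sum.distrib disturbance by (subst sum.swap) (rule refl)
  also have "\<dots> = (\<Sum>k\<le>H. AKpow k (w (t-1-k)))
      + (\<Sum>k\<le>H. AKpow k (\<Sum>j<N. mv (m j) (B j) (dac_offset Q j (t-1-k))))"
    using sum_feedback_term t by (simp add: atLeast0AtMost)
  finally show ?thesis
    unfolding drive_def funpow_mv_add sum.distrib by (simp add: add.commute)
qed

definition state_trunc_err :: real where
  "state_trunc_err = \<kappa> * (1-\<gamma>)^(H+1) * (\<kappa> * drive_const / \<gamma>)"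

lemma state_minus_ideal_le:
  assumes t: "H + 1 \<le> t" and Q: "\<And>j s. j < N \<Longrightarrow> Q j s \<in> calM n (m j) H \<kappa> \<gamma>"
  shows "vnorm n (state Q t - ideal_state n m N A B K H Q w t) \<le> state_trunc_err"
proof -
  have "state Q t - ideal_state n m N A B K H Q w t = AKpow (H+1) (state Q (t-H-1))"
    unfolding state_unroll[OF t] ideal_state_eq_truncated_unroll[OF t] by simp
  moreover have "vnorm n (state Q (t-H-1)) \<le> \<kappa> * drive_const / \<gamma>"
    by (rule state_le) (rule drive_le, rule Q)
  moreover have "0 \<le> \<kappa> * (1-\<gamma>)^(H+1)" using kappa_ge_1 gamma_le_1 by simp
  ultimately show ?thesis unfolding state_trunc_err_def
    using AKpow_le[of "H+1" "state Q (t-H-1)"]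
      mult_left_mono[of "vnorm n (state Q (t-H-1))" "\<kappa> * drive_const / \<gamma>" "\<kappa> * (1-\<gamma>)^(H+1)"]
    by simp
qed

lemma feedback_term_diff_le:
  assumes i: "i < N" and others: "\<And>j. j \<noteq> i \<Longrightarrow> Q' j = Q j" and \<delta>: "0 \<le> \<delta>"
    and Qi: "\<And>q. q < H \<Longrightarrow> mat_frob (m i) n (Q i (t-1-k) q - Q' i (t-1-k) q) \<le> \<delta>"
  shows "vnorm n (feedback_term Q t k l - feedback_term Q' t k l) \<le> \<kappa> * (\<beta> * (\<delta> * W))"
proof (cases "k < l \<and> l - k \<le> H")
  case False
  have "0 \<le> \<kappa> * (\<beta> * (\<delta> * W))" using kappa_ge_1 beta_nonneg i \<delta> W_nonneg by simp
  then show ?thesis unfolding feedback_term_def using False by auto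
next
  case True
  define s where "s = t - 1 - k"
  define q where "q = l - k - 1"
  have q: "q < H" using True unfolding q_def by arith
  define U where "U R = (\<Sum>j<N. mv (m j) (B j) (mv n (R j s q) (wp w t (Suc l))))" for R
  define D where "D j = mv (m j) (B j) (mv n (Q j s q) (wp w t (Suc l)))
    - mv (m j) (B j) (mv n (Q' j s q) (wp w t (Suc l)))" for j
  have Di: "D i = mv (m i) (B i) (mv n (Q i s q - Q' i s q) (wp w t (Suc l)))"
    unfolding D_def mv_diff[symmetric] mv_mat_diff ..
  have "vnorm (m i) (mv n (Q i s q - Q' i s q) (wp w t (Suc l)))
      \<le> mat_frob (m i) n (Q i s q - Q' i s q) * W"
    using vnorm_mv_le_mat_frob mult_left_mono[OF wp_le mat_frob_nonneg] by (rule order_trans)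
  then have "vnorm n (D i) \<le> \<beta> * (mat_frob (m i) n (Q i s q - Q' i s q) * W)"
    unfolding Di using B_le[OF i] beta_nonneg i
    by (intro order_trans[OF vnorm_mv_le_opnorm[of n "m i" "B i"]] mult_mono) auto
  also have "\<dots> \<le> \<beta> * (\<delta> * W)"
    using Qi[OF q] beta_nonneg i W_nonneg unfolding s_def
    by (intro mult_left_mono mult_right_mono) auto
  finally have D_le: "\<kappa> * vnorm n (D i) \<le> \<kappa> * (\<beta> * (\<delta> * W))"
    using kappa_ge_1 by (intro mult_left_mono) auto
  have "(\<Sum>j<N. D j) = D i + (\<Sum>j\<in>{..<N} - {i}. D j)" using i by (intro sum.remove) auto
  also have "(\<Sum>j\<in>{..<N} - {i}. D j) = 0" unfolding D_def using others by (intro sum.neutral) auto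
  finally have "U Q - U Q' = D i" unfolding U_def D_def sum_subtractf by (simp only: add_0_right)
  moreover have "feedback_term Q t k l - feedback_term Q' t k l = AKpow k (U Q - U Q')"
    unfolding feedback_term_def U_def s_def q_def using True
    by (simp only: if_True simp_thms funpow_mv_diff)
  ultimately show ?thesis using D_le AKpow_le_kappa[of k "D i"] by simp
qed

definition ideal_sens :: real where
  "ideal_sens = (2 * real H + 1) * (real H + 1) * (\<kappa> * (\<beta> * W))"

lemma ideal_state_diff_le:
  assumes i: "i < N" and others: "\<And>j. j \<noteq> i \<Longrightarrow> Q' j = Q j" and \<delta>: "0 \<le> \<delta>"
    and Qi: "\<And>k q. k \<le> H \<Longrightarrow> q < H \<Longrightarrow> mat_frob (m i) n (Q i (t-1-k) q - Q' i (t-1-k) q) \<le> \<delta>"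
  shows "vnorm n (ideal_state n m N A B K H Q w t - ideal_state n m N A B K H Q' w t)
           \<le> ideal_sens * \<delta>"
proof -
  have "ideal_state n m N A B K H Q w t - ideal_state n m N A B K H Q' w t
      = (\<Sum>l\<in>{0..2*H}. \<Sum>k\<in>{0..H}. feedback_term Q t k l - feedback_term Q' t k l)"
    unfolding ideal_state_eq sum_subtractf[symmetric] add_diff_cancel_left ..
  then have "vnorm n (ideal_state n m N A B K H Q w t - ideal_state n m N A B K H Q' w t)
      \<le> (\<Sum>l\<in>{0..2*H}. \<Sum>k\<in>{0..H}. vnorm n (feedback_term Q t k l - feedback_term Q' t k l))"
    by (simp only:) (rule order_trans[OF vnorm_sum_le sum_mono], rule vnorm_sum_le)
  also have "\<dots> \<le> (\<Sum>l\<in>{0..2*H}. \<Sum>k\<in>{0..H}. \<kappa> * (\<beta> * (\<delta> * W)))"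
    using feedback_term_diff_le[OF i others \<delta>] Qi by (intro sum_mono) auto
  also have "\<dots> = ideal_sens * \<delta>" by (simp add: ideal_sens_def algebra_simps)
  finally show ?thesis .
qed

end

section \<open>Projected gradient steps on parameter tuples\<close>

lemma frob_commute: "frob H r c X Y = frob H r c Y X"
  by (simp add: frob_def mult.commute)

lemma frob_self_nonneg: "0 \<le> frob H r c X X"
  by (simp add: frob_def sum_nonneg)

lemma frob_diff_commute: "frob H r c (X - Y) (X - Y) = frob H r c (Y - X) (Y - X)"
  by (simp add: frob_def algebra_simps)

lemma frob_diff_right_commute: "frob H r c g (X - Y) = - frob H r c g (Y - X)"
  by (simp add: frob_def algebra_simps sum_negf[symmetric])

lemma frob_add_scaled_self:
  "frob H r c (\<lambda>p a b. X p a b + s * V p a b) (\<lambda>p a b. X p a b + s * V p a b)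
     = frob H r c X X + 2 * s * frob H r c X V + s^2 * frob H r c V V"
  by (simp add: frob_def algebra_simps power2_eq_square sum.distrib sum_distrib_left)

lemma frob_scaled_self: "frob H r c (\<lambda>p a b. s * V p a b) (\<lambda>p a b. s * V p a b) = s^2 * frob H r c V V"
  by (simp add: frob_def power2_eq_square sum_distrib_left algebra_simps)

lemma nonneg_if_nonneg_add_small_multiples:
  fixes a b :: real
  assumes "\<And>\<theta>. 0 < \<theta> \<Longrightarrow> \<theta> \<le> 1 \<Longrightarrow> 0 \<le> a + \<theta> * b"
  shows "0 \<le> a"
proof (rule ccontr)
  assume "\<not> 0 \<le> a"
  define \<theta> where "\<theta> = min 1 (- a / (2 * (\<bar>b\<bar> + 1)))"
  have "0 < - a / (2 * (\<bar>b\<bar> + 1))" using \<open>\<not> 0 \<le> a\<close> by (intro divide_pos_pos) auto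
  then have \<theta>: "0 < \<theta>" "\<theta> \<le> 1" by (auto simp: \<theta>_def)
  have "\<theta> * b \<le> \<theta> * \<bar>b\<bar>" using \<theta> by (intro mult_left_mono) auto
  also have "\<dots> \<le> (- a / (2 * (\<bar>b\<bar> + 1))) * \<bar>b\<bar>" by (intro mult_right_mono) (auto simp: \<theta>_def)
  also have "\<dots> \<le> - a / 2"
    using \<open>\<not> 0 \<le> a\<close> by (simp add: field_simps)
  finally show False using assms[OF \<theta>] \<open>\<not> 0 \<le> a\<close> by linarith
qed

lemma is_proj_dist_le:
  assumes proj: "is_proj H r c S Z X" and Y: "Y \<in> S"
    and segment: "\<And>\<theta>. 0 < \<theta> \<Longrightarrow> \<theta> \<le> 1 \<Longrightarrow> (\<lambda>p a b. X p a b + \<theta> * (Y p a b - X p a b)) \<in> S"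
  shows "frob H r c (X - Y) (X - Y) \<le> frob H r c (Z - Y) (Z - Y)"
proof -
  define u where "u = X - Z"
  define v where "v = Y - X"
  have along: "(\<lambda>p a b. X p a b + \<theta> * (Y p a b - X p a b)) - Z = (\<lambda>p a b. u p a b + \<theta> * v p a b)" for \<theta>
    by (simp add: u_def v_def fun_eq_iff algebra_simps)
  have "0 \<le> 2 * frob H r c u v + \<theta> * frob H r c v v" if "0 < \<theta>" "\<theta> \<le> 1" for \<theta>
  proof -
    have "frob H r c (X - Z) (X - Z) \<le> frob H r c
        ((\<lambda>p a b. X p a b + \<theta> * (Y p a b - X p a b)) - Z) ((\<lambda>p a b. X p a b + \<theta> * (Y p a b - X p a b)) - Z)"
      using proj segment[OF that] unfolding is_proj_def by blast
    then have "frob H r c u u \<le> frob H r c (\<lambda>p a b. u p a b + \<theta> * v p a b) (\<lambda>p a b. u p a b + \<theta> * v p a b)"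
      unfolding along u_def[symmetric] .
    then have "0 \<le> \<theta> * (2 * frob H r c u v + \<theta> * frob H r c v v)"
      unfolding frob_add_scaled_self by (simp add: algebra_simps power2_eq_square)
    then show ?thesis using that by (simp add: zero_le_mult_iff)
  qed
  \<comment> \<open>the variational inequality \<open>\<langle>X - Z, Y - X\<rangle> \<ge> 0\<close> of the projection\<close>
  then have "0 \<le> 2 * frob H r c u v" by (rule nonneg_if_nonneg_add_small_multiples)
  moreover have "frob H r c (Z - Y) (Z - Y) = frob H r c u u + 2 * frob H r c u v + frob H r c v v"
  proof -
    have "Y - Z = (\<lambda>p a b. u p a b + 1 * v p a b)" by (simp add: u_def v_def fun_eq_iff)
    then show ?thesis using frob_add_scaled_self[of H r c u 1 v] frob_diff_commute[of H r c Z Y] by simp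
  qed
  moreover have "frob H r c (X - Y) (X - Y) = frob H r c v v"
    unfolding v_def by (rule frob_diff_commute)
  ultimately show ?thesis using frob_self_nonneg[of H r c u] by linarith
qed

lemma ogd_step_le:
  assumes proj: "is_proj H r c S (Xo - (\<lambda>p a b. \<eta> * g p a b)) Xn" and Y: "Y \<in> S"
    and segment: "\<And>\<theta>. 0 < \<theta> \<Longrightarrow> \<theta> \<le> 1 \<Longrightarrow> (\<lambda>p a b. Xn p a b + \<theta> * (Y p a b - Xn p a b)) \<in> S"
    and \<eta>: "0 < \<eta>"
  shows "frob H r c g (Xo - Y)
    \<le> (frob H r c (Xo - Y) (Xo - Y) - frob H r c (Xn - Y) (Xn - Y)) / (2*\<eta>) + \<eta>/2 * frob H r c g g"
proof -
  define D where "D = Xo - Y"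
  have "(Xo - (\<lambda>p a b. \<eta> * g p a b)) - Y = (\<lambda>p a b. D p a b + (- \<eta>) * g p a b)"
    by (simp add: D_def fun_eq_iff algebra_simps)
  then have "frob H r c (Xn - Y) (Xn - Y)
      \<le> frob H r c (\<lambda>p a b. D p a b + (- \<eta>) * g p a b) (\<lambda>p a b. D p a b + (- \<eta>) * g p a b)"
    using is_proj_dist_le[OF proj Y segment] by (simp only:)
  also have "\<dots> = frob H r c D D - 2 * \<eta> * frob H r c g D + \<eta>^2 * frob H r c g g"
    unfolding frob_add_scaled_self frob_commute[of H r c D g] by simp
  finally show ?thesis unfolding D_def using \<eta> by (simp add: field_simps power2_eq_square)
qed

definition frob_norm :: "nat \<Rightarrow> nat \<Rightarrow> nat \<Rightarrow> (nat \<Rightarrow> mat) \<Rightarrow> real" where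
  "frob_norm H r c X = sqrt (frob H r c X X)"

lemma frob_norm_nonneg [simp]: "0 \<le> frob_norm H r c X"
  by (simp add: frob_norm_def frob_self_nonneg)

lemma frob_norm_sq: "(frob_norm H r c X)^2 = frob H r c X X"
  by (simp add: frob_norm_def frob_self_nonneg)

lemma frob_norm_diff_commute: "frob_norm H r c (X - Y) = frob_norm H r c (Y - X)"
  unfolding frob_norm_def frob_diff_commute ..

lemma frob_norm_eq_L2_set: "frob_norm H r c X = L2_set (\<lambda>(p,a,b). X p a b) ({..<H} \<times> {..<r} \<times> {..<c})"
proof -
  have "frob H r c X X = (\<Sum>(p,a,b)\<in>{..<H} \<times> {..<r} \<times> {..<c}. (X p a b)^2)"
    unfolding frob_def by (simp add: sum.cartesian_product power2_eq_square)
  then show ?thesis unfolding frob_norm_def L2_set_def by (simp add: case_prod_beta)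
qed

lemma frob_norm_triangle: "frob_norm H r c (X - Z) \<le> frob_norm H r c (X - Y) + frob_norm H r c (Y - Z)"
proof -
  have "frob_norm H r c (X - Z) = L2_set (\<lambda>i. (\<lambda>(p,a,b). (X - Y) p a b) i + (\<lambda>(p,a,b). (Y - Z) p a b) i)
      ({..<H} \<times> {..<r} \<times> {..<c})"
    unfolding frob_norm_eq_L2_set by (intro L2_set_cong) auto
  also have "\<dots> \<le> frob_norm H r c (X - Y) + frob_norm H r c (Y - Z)"
    unfolding frob_norm_eq_L2_set by (rule L2_set_triangle_ineq)
  finally show ?thesis .
qed

lemma mat_frob_le_frob_norm: "q < H \<Longrightarrow> mat_frob r c (X q) \<le> frob_norm H r c X"
  unfolding mat_frob_def frob_norm_def frob_def power2_eq_square
  by (intro real_sqrt_le_mono member_le_sum[where f = "\<lambda>p. \<Sum>a<r. \<Sum>b<c. X p a b * X p a b"])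
     (auto intro!: sum_nonneg)

lemma is_proj_step_le:
  assumes proj: "is_proj H r c S (Xo - (\<lambda>p a b. \<eta> * g p a b)) Xn" and Xo: "Xo \<in> S" and \<eta>: "0 \<le> \<eta>"
  shows "frob_norm H r c (Xn - Xo) \<le> 2 * \<eta> * frob_norm H r c g"
proof -
  define Z where "Z = Xo - (\<lambda>p a b. \<eta> * g p a b)"
  have "Xo - Z = (\<lambda>p a b. \<eta> * g p a b)" by (simp add: Z_def)
  then have dist: "frob_norm H r c (Xo - Z) = \<eta> * frob_norm H r c g"
    using \<eta> by (simp add: frob_norm_def frob_scaled_self real_sqrt_mult)
  have "frob H r c (Xn - Z) (Xn - Z) \<le> frob H r c (Xo - Z) (Xo - Z)"
    using proj Xo unfolding is_proj_def Z_def by blast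
  then have "frob_norm H r c (Xn - Z) \<le> frob_norm H r c (Xo - Z)"
    unfolding frob_norm_def by (rule real_sqrt_le_mono)
  then show ?thesis
    using frob_norm_triangle[of H r c Xn Xo Z] frob_norm_diff_commute[of H r c Z Xo] dist by linarith
qed

lemma subgrad_norm_le_lipschitz:
  assumes sg: "subgrad H r c f X g"
    and lip: "\<And>Y Y'. f Y - f Y' \<le> L * frob_norm H r c (Y - Y')" and L: "0 \<le> L"
  shows "frob_norm H r c g \<le> L"
proof -
  have "f (X + g) \<ge> f X + frob H r c g g" using sg unfolding subgrad_def by (metis add_diff_cancel_left')
  moreover have "f (X + g) - f X \<le> L * frob_norm H r c g" using lip[of "X + g" X] by simp
  ultimately have "(frob_norm H r c g)^2 \<le> L * frob_norm H r c g" unfolding frob_norm_sq by linarith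
  then show ?thesis
    using L by (metis frob_norm_nonneg mult_right_le_imp_le not_le order_less_le power2_eq_square
      mult_le_cancel_right)
qed

lemma calM_segment:
  assumes X: "X \<in> calM n r H \<kappa> \<gamma>" and Y: "Y \<in> calM n r H \<kappa> \<gamma>" and \<theta>: "0 \<le> \<theta>" "\<theta> \<le> 1"
  shows "(\<lambda>p a b. X p a b + \<theta> * (Y p a b - X p a b)) \<in> calM n r H \<kappa> \<gamma>"
  unfolding calM_def
proof (intro CollectI ballI)
  fix p assume p: "p \<in> {1..H}"
  have "opnorm r n (\<lambda>a b. X (p-1) a b + \<theta> * (Y (p-1) a b - X (p-1) a b))
      \<le> (1-\<theta>) * opnorm r n (X (p-1)) + \<theta> * opnorm r n (Y (p-1))"
    by (rule opnorm_segment_le[OF \<theta>])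
  also have "\<dots> \<le> (1-\<theta>) * (2 * \<kappa>^2 * (1-\<gamma>)^p) + \<theta> * (2 * \<kappa>^2 * (1-\<gamma>)^p)"
    using X Y p \<theta> unfolding calM_def by (intro add_mono mult_left_mono) auto
  also have "\<dots> = 2 * \<kappa>^2 * (1-\<gamma>)^p" by (simp add: algebra_simps)
  finally show "opnorm r n ((\<lambda>p a b. X p a b + \<theta> * (Y p a b - X p a b)) (p - 1)) \<le> 2 * \<kappa>^2 * (1-\<gamma>)^p"
    by simp
qed

lemma frob_self_le_of_calM:
  assumes M: "M \<in> calM n r H \<kappa> \<gamma>" and \<gamma>: "0 < \<gamma>" "\<gamma> \<le> 1"
  shows "frob H r n M M \<le> real H * (real n * (2*\<kappa>^2)^2)"
proof -
  have "frob H r n M M = (\<Sum>p<H. \<Sum>a<r. \<Sum>b<n. (M p a b)^2)" by (simp add: frob_def power2_eq_square)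
  also have "\<dots> \<le> (\<Sum>p<H. real n * (2*\<kappa>^2)^2)"
  proof (rule sum_mono)
    fix p assume p: "p \<in> {..<H}"
    have "opnorm r n (M p) \<le> 2*\<kappa>^2 * (1-\<gamma>)^(Suc p)" using M p unfolding calM_def by force
    also have "\<dots> \<le> 2*\<kappa>^2" using \<gamma> by (intro mult_left_le power_le_one) auto
    finally have "(opnorm r n (M p))^2 \<le> (2*\<kappa>^2)^2" by (intro power_mono) auto
    then show "(\<Sum>a<r. \<Sum>b<n. (M p a b)^2) \<le> real n * (2*\<kappa>^2)^2"
      using sumsq_le_opnorm[where X="M p" and r=r and c=n] by (meson mult_left_mono of_nat_0_le_iff order_trans)
  qed
  finally show ?thesis by simp
qed

section \<open>Regret of the aggregated-control controller\<close>

locale agc_agent = stable_system +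
  fixes i :: nat and c :: "nat \<Rightarrow> vec \<Rightarrow> vec \<Rightarrow> real" and P :: "nat \<Rightarrow> nat \<Rightarrow> nat \<Rightarrow> mat"
    and Ms :: "nat \<Rightarrow> mat" and \<eta> Lb :: real
  assumes i_lt_N: "i < N"
    and cost_lipschitz: "\<And>t. lipschitz_cost n (m i) Lb (c t)" and Lb_nonneg: "0 \<le> Lb"
    and others_in_calM: "\<And>j t. j < N \<Longrightarrow> j \<noteq> i \<Longrightarrow> P j t \<in> calM n (m j) H \<kappa> \<gamma>"
    and run: "agc_run n m N A B K H \<kappa> \<gamma> \<eta> i c w P"
    and Ms_in_calM: "Ms \<in> calM n (m i) H \<kappa> \<gamma>"
    and eta_pos: "0 < \<eta>"
begin

abbreviation comparator :: "nat \<Rightarrow> nat \<Rightarrow> nat \<Rightarrow> mat" where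
  "comparator \<equiv> P(i := (\<lambda>_. Ms))"

definition loss :: "nat \<Rightarrow> (nat \<Rightarrow> mat) \<Rightarrow> real" where
  "loss t M = ideal_loss n m N A B K H P w i c t M"

definition grad :: "nat \<Rightarrow> nat \<Rightarrow> mat" where
  "grad t = (SOME g. subgrad H (m i) n (loss t) (P i t) g \<and>
     is_proj H (m i) n (calM n (m i) H \<kappa> \<gamma>) (P i t - (\<lambda>p a b. \<eta> * g p a b)) (P i (Suc t)))"

definition loss_lip :: real where
  "loss_lip = Lb * ((1+\<kappa>) * ideal_sens + real H * W)"

definition drift :: real where
  "drift = real (H+1) * (2 * \<eta> * loss_lip)"

definition dist_sq :: "nat \<Rightarrow> real" where
  "dist_sq t = frob H (m i) n (P i t - Ms) (P i t - Ms)"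

lemma grad_spec:
  "subgrad H (m i) n (loss t) (P i t) (grad t) \<and>
   is_proj H (m i) n (calM n (m i) H \<kappa> \<gamma>) (P i t - (\<lambda>p a b. \<eta> * grad t p a b)) (P i (Suc t))"
proof -
  have "\<exists>g. subgrad H (m i) n (loss t) (P i t) g \<and>
     is_proj H (m i) n (calM n (m i) H \<kappa> \<gamma>) (P i t - (\<lambda>p a b. \<eta> * g p a b)) (P i (Suc t))"
    using run unfolding agc_run_def loss_def by blast
  then show ?thesis unfolding grad_def by (rule someI_ex)
qed

lemmas grad = grad_spec[THEN conjunct1] grad_spec[THEN conjunct2]

lemma N_pos: "0 < N"
  using i_lt_N by simp

lemma P_i_in_calM: "P i t \<in> calM n (m i) H \<kappa> \<gamma>"
proof (cases t)
  case 0 then show ?thesis using run unfolding agc_run_def by simp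
next
  case (Suc s) then show ?thesis using grad(2)[of s] unfolding is_proj_def by simp
qed

lemma P_in_calM: "j < N \<Longrightarrow> P j s \<in> calM n (m j) H \<kappa> \<gamma>"
  using others_in_calM P_i_in_calM by (cases "j = i") auto

lemma update_in_calM:
  "M \<in> calM n (m i) H \<kappa> \<gamma> \<Longrightarrow> j < N \<Longrightarrow> (P(i := (\<lambda>_. M))) j s \<in> calM n (m j) H \<kappa> \<gamma>"
  using P_in_calM by (cases "j = i") auto

lemma ideal_sens_nonneg: "0 \<le> ideal_sens"
  unfolding ideal_sens_def using kappa_ge_1 beta_nonneg[OF N_pos] W_nonneg by simp

lemma loss_lip_nonneg: "0 \<le> loss_lip"
  unfolding loss_lip_def using Lb_nonneg ideal_sens_nonneg kappa_ge_1 W_nonneg by simp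

text \<open>The disturbance-feedback parts of the two actions cancel; only \<open>-K\<^sub>i\<close> sees the state error.\<close>
lemma cost_dac_diff_le:
  "c t x (dac_act n H (K i) M w t x) - c t y (dac_act n H (K i) M w t y) \<le> Lb * (1+\<kappa>) * vnorm n (x - y)"
proof -
  have "dac_act n H (K i) M w t x - dac_act n H (K i) M w t y = mv n (K i) (y - x)"
    unfolding dac_act_def mv_diff by (simp add: algebra_simps)
  then have "vnorm (m i) (dac_act n H (K i) M w t x - dac_act n H (K i) M w t y) \<le> \<kappa> * vnorm n (x - y)"
    using strongly_stable_K_le[OF strongly_stable i_lt_N, of "y - x"] vnorm_diff_commute[of n y x] by simp
  then have "Lb * (vnorm n (x - y) + vnorm (m i) (dac_act n H (K i) M w t x - dac_act n H (K i) M w t y))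
      \<le> Lb * (1+\<kappa>) * vnorm n (x - y)"
    using Lb_nonneg by (simp add: mult_left_mono algebra_simps)
  moreover have "\<bar>c t x (dac_act n H (K i) M w t x) - c t y (dac_act n H (K i) M w t y)\<bar>
      \<le> Lb * (vnorm n (x - y) + vnorm (m i) (dac_act n H (K i) M w t x - dac_act n H (K i) M w t y))"
    using cost_lipschitz[of t] unfolding lipschitz_cost_def by blast
  ultimately show ?thesis by linarith
qed

lemma dac_offset_param_diff_le:
  assumes "\<And>q. q < H \<Longrightarrow> mat_frob (m i) n (M q - M' q) \<le> \<delta>" and "0 \<le> \<delta>"
  shows "vnorm (m i) (\<Sum>p\<in>{1..H}. mv n (M (p-1) - M' (p-1)) (wp w t p)) \<le> real H * (\<delta> * W)"
proof -
  have "vnorm (m i) (\<Sum>p\<in>{1..H}. mv n (M (p-1) - M' (p-1)) (wp w t p))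
      \<le> (\<Sum>p\<in>{1..H}. vnorm (m i) (mv n (M (p-1) - M' (p-1)) (wp w t p)))"
    by (rule vnorm_sum_le)
  also have "\<dots> \<le> (\<Sum>p\<in>{1..H}. \<delta> * W)"
  proof (rule sum_mono)
    fix p assume "p \<in> {1..H}"
    then have "mat_frob (m i) n (M (p-1) - M' (p-1)) \<le> \<delta>" by (intro assms) auto
    then show "vnorm (m i) (mv n (M (p-1) - M' (p-1)) (wp w t p)) \<le> \<delta> * W"
      using wp_le[of t p] assms(2)
      by (intro order_trans[OF vnorm_mv_le_mat_frob] mult_mono) auto
  qed
  finally show ?thesis by simp
qed

lemma loss_lipschitz: "loss t M - loss t M' \<le> loss_lip * frob_norm H (m i) n (M - M')"
proof -
  define \<delta> where "\<delta> = frob_norm H (m i) n (M - M')"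
  define y where "y = ideal_state n m N A B K H (P(i := (\<lambda>_. M))) w t"
  define y' where "y' = ideal_state n m N A B K H (P(i := (\<lambda>_. M'))) w t"
  have \<delta>: "0 \<le> \<delta>" "\<And>q. q < H \<Longrightarrow> mat_frob (m i) n (M q - M' q) \<le> \<delta>"
    unfolding \<delta>_def using mat_frob_le_frob_norm[of _ H "m i" n "M - M'"] by auto
  have y: "vnorm n (y - y') \<le> ideal_sens * \<delta>"
    unfolding y_def y'_def using \<delta> by (intro ideal_state_diff_le[OF i_lt_N]) auto
  have "dac_act n H (K i) M w t y - dac_act n H (K i) M' w t y'
      = mv n (K i) (y' - y) + (\<Sum>p\<in>{1..H}. mv n (M (p-1) - M' (p-1)) (wp w t p))"
    unfolding dac_act_def mv_diff mv_mat_diff sum_subtractf by (simp add: algebra_simps)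
  then have "vnorm (m i) (dac_act n H (K i) M w t y - dac_act n H (K i) M' w t y')
      \<le> vnorm (m i) (mv n (K i) (y' - y)) + vnorm (m i) (\<Sum>p\<in>{1..H}. mv n (M (p-1) - M' (p-1)) (wp w t p))"
    by (simp only: vnorm_add_le)
  moreover have "vnorm (m i) (mv n (K i) (y' - y)) \<le> \<kappa> * (ideal_sens * \<delta>)"
    using y kappa_ge_1 vnorm_diff_commute[of n y' y]
    by (intro order_trans[OF strongly_stable_K_le[OF strongly_stable i_lt_N]] mult_left_mono) auto
  moreover have "vnorm (m i) (\<Sum>p\<in>{1..H}. mv n (M (p-1) - M' (p-1)) (wp w t p)) \<le> real H * (\<delta> * W)"
    by (rule dac_offset_param_diff_le) (use \<delta> in auto)
  ultimately have u: "vnorm (m i) (dac_act n H (K i) M w t y - dac_act n H (K i) M' w t y')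
      \<le> \<kappa> * (ideal_sens * \<delta>) + real H * (\<delta> * W)"
    by linarith
  have "loss t M - loss t M'
      \<le> Lb * (vnorm n (y - y') + vnorm (m i) (dac_act n H (K i) M w t y - dac_act n H (K i) M' w t y'))"
    using cost_lipschitz[of t] unfolding loss_def ideal_loss_def lipschitz_cost_def y_def y'_def Let_def
    by (blast dest: abs_le_D1)
  also have "\<dots> \<le> Lb * (ideal_sens * \<delta> + (\<kappa> * (ideal_sens * \<delta>) + real H * (\<delta> * W)))"
    using y u Lb_nonneg by (intro mult_left_mono add_mono) auto
  also have "\<dots> = loss_lip * \<delta>" unfolding loss_lip_def by (simp add: algebra_simps)
  finally show ?thesis unfolding \<delta>_def .
qed

lemma grad_norm_le: "frob_norm H (m i) n (grad t) \<le> loss_lip"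
  using subgrad_norm_le_lipschitz[OF grad(1) loss_lipschitz loss_lip_nonneg] .

lemma P_i_step_le: "frob_norm H (m i) n (P i (Suc s) - P i s) \<le> 2 * \<eta> * loss_lip"
proof -
  have "frob_norm H (m i) n (P i (Suc s) - P i s) \<le> 2 * \<eta> * frob_norm H (m i) n (grad s)"
    using is_proj_step_le[OF grad(2) P_i_in_calM] eta_pos by simp
  also have "\<dots> \<le> 2 * \<eta> * loss_lip" using grad_norm_le[of s] eta_pos by simp
  finally show ?thesis .
qed

lemma P_i_drift_le: "frob_norm H (m i) n (P i (s + d) - P i s) \<le> real d * (2 * \<eta> * loss_lip)"
proof (induction d)
  case 0 then show ?case by (simp add: frob_norm_def frob_def)
next
  case (Suc d)
  have r: "real (Suc d) * (2 * \<eta> * loss_lip) = 2 * \<eta> * loss_lip + real d * (2 * \<eta> * loss_lip)"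
    by (simp add: algebra_simps)
  have "frob_norm H (m i) n (P i (Suc (s + d)) - P i s)
      \<le> frob_norm H (m i) n (P i (Suc (s + d)) - P i (s + d)) + frob_norm H (m i) n (P i (s + d) - P i s)"
    by (rule frob_norm_triangle)
  also have "\<dots> \<le> 2 * \<eta> * loss_lip + real d * (2 * \<eta> * loss_lip)"
    using P_i_step_le Suc.IH by (rule add_mono)
  finally show ?case unfolding r add_Suc_right .
qed

lemma cost_minus_loss_le:
  assumes t: "H + 1 \<le> t"
  shows "c t (state P t) (dac_act n H (K i) (P i t) w t (state P t)) - loss t (P i t)
    \<le> Lb * (1+\<kappa>) * (state_trunc_err + ideal_sens * drift)"
proof -
  define y where "y = ideal_state n m N A B K H P w t"
  define yh where "yh = ideal_state n m N A B K H (P(i := (\<lambda>_. P i t))) w t"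
  have "vnorm n (state P t - y) \<le> state_trunc_err"
    unfolding y_def by (rule state_minus_ideal_le[OF t P_in_calM])
  moreover have "vnorm n (y - yh) \<le> ideal_sens * drift"
    unfolding y_def yh_def
  proof (rule ideal_state_diff_le[OF i_lt_N])
    show "0 \<le> drift" unfolding drift_def using eta_pos loss_lip_nonneg by simp
    fix k q assume k: "k \<le> H" and q: "q < H"
    have st: "(t - 1 - k) + (k + 1) = t" using k t by simp
    have "mat_frob (m i) n ((P i (t - 1 - k) - P i t) q) \<le> frob_norm H (m i) n (P i (t - 1 - k) - P i t)"
      by (rule mat_frob_le_frob_norm[OF q])
    also have "\<dots> \<le> real (k+1) * (2 * \<eta> * loss_lip)"
      using P_i_drift_le[of "t - 1 - k" "k + 1"] unfolding st frob_norm_diff_commute[of _ _ _ "P i t"] .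
    also have "\<dots> \<le> drift" unfolding drift_def using k eta_pos loss_lip_nonneg by (intro mult_right_mono) auto
    finally show "mat_frob (m i) n (P i (t - 1 - k) q - (P(i := (\<lambda>_. P i t))) i (t - 1 - k) q) \<le> drift"
      by simp
  qed simp
  ultimately have "vnorm n (state P t - yh) \<le> state_trunc_err + ideal_sens * drift"
    using vnorm_triangle[of n "state P t" yh y] by linarith
  then have "Lb * (1+\<kappa>) * vnorm n (state P t - yh) \<le> Lb * (1+\<kappa>) * (state_trunc_err + ideal_sens * drift)"
    using Lb_nonneg kappa_ge_1 by (intro mult_left_mono) auto
  moreover have "loss t (P i t) = c t yh (dac_act n H (K i) (P i t) w t yh)"
    unfolding loss_def ideal_loss_def yh_def Let_def ..
  ultimately show ?thesis using cost_dac_diff_le[of t "state P t" "P i t" yh] by linarith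
qed

lemma loss_minus_comparator_cost_le:
  assumes t: "H + 1 \<le> t"
  shows "loss t Ms - c t (state comparator t) (dac_act n H (K i) Ms w t (state comparator t))
    \<le> Lb * (1+\<kappa>) * state_trunc_err"
proof -
  define ys where "ys = ideal_state n m N A B K H comparator w t"
  have "vnorm n (ys - state comparator t) \<le> state_trunc_err"
    unfolding ys_def vnorm_diff_commute[of n _ "state comparator t"]
    by (rule state_minus_ideal_le[OF t update_in_calM[OF Ms_in_calM]])
  then have "Lb * (1+\<kappa>) * vnorm n (ys - state comparator t) \<le> Lb * (1+\<kappa>) * state_trunc_err"
    using Lb_nonneg kappa_ge_1 by (intro mult_left_mono) auto
  moreover have "loss t Ms = c t ys (dac_act n H (K i) Ms w t ys)"
    unfolding loss_def ideal_loss_def ys_def Let_def ..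
  ultimately show ?thesis using cost_dac_diff_le[of t ys Ms "state comparator t"] by linarith
qed

lemma loss_minus_comparator_loss_le:
  "loss t (P i t) - loss t Ms \<le> (dist_sq t - dist_sq (Suc t)) / (2*\<eta>) + \<eta>/2 * loss_lip^2"
proof -
  have "loss t Ms \<ge> loss t (P i t) + frob H (m i) n (grad t) (Ms - P i t)"
    using grad(1) unfolding subgrad_def by blast
  then have "loss t (P i t) - loss t Ms \<le> frob H (m i) n (grad t) (P i t - Ms)"
    using frob_diff_right_commute[of H "m i" n "grad t" Ms "P i t"] by linarith
  also have "\<dots> \<le> (dist_sq t - dist_sq (Suc t)) / (2*\<eta>) + \<eta>/2 * frob H (m i) n (grad t) (grad t)"
    unfolding dist_sq_def
    by (rule ogd_step_le[OF grad(2) Ms_in_calM _ eta_pos]) (rule calM_segment[OF P_i_in_calM Ms_in_calM], auto)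
  also have "frob H (m i) n (grad t) (grad t) \<le> loss_lip^2"
    using grad_norm_le[of t] unfolding frob_norm_sq[symmetric] by (intro power_mono) auto
  then have "\<eta>/2 * frob H (m i) n (grad t) (grad t) \<le> \<eta>/2 * loss_lip^2"
    using eta_pos by (intro mult_left_mono) auto
  finally show ?thesis by simp
qed

lemma dist_sq_nonneg: "0 \<le> dist_sq t"
  unfolding dist_sq_def by (rule frob_self_nonneg)

lemma dist_sq_le: "dist_sq t \<le> 4 * (real H * (real n * (2*\<kappa>^2)^2))"
proof -
  define D where "D = real H * (real n * (2*\<kappa>^2)^2)"
  have norm_le: "frob_norm H (m i) n (X - 0) \<le> sqrt D" if "X \<in> calM n (m i) H \<kappa> \<gamma>" for X
    unfolding frob_norm_def D_def using frob_self_le_of_calM[OF that gamma_pos gamma_le_1]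
    by (simp add: real_sqrt_le_mono)
  have "frob_norm H (m i) n (P i t - Ms) \<le> frob_norm H (m i) n (P i t - 0) + frob_norm H (m i) n (0 - Ms)"
    by (rule frob_norm_triangle)
  also have "frob_norm H (m i) n (0 - Ms) = frob_norm H (m i) n (Ms - 0)"
    by (rule frob_norm_diff_commute)
  also have "frob_norm H (m i) n (P i t - 0) + frob_norm H (m i) n (Ms - 0) \<le> 2 * sqrt D"
    using norm_le[OF P_i_in_calM[of t]] norm_le[OF Ms_in_calM] by simp
  finally have "frob_norm H (m i) n (P i t - Ms) \<le> 2 * sqrt D" .
  then have "(frob_norm H (m i) n (P i t - Ms))^2 \<le> (2 * sqrt D)^2" by (rule power_mono) simp
  then show ?thesis unfolding dist_sq_def frob_norm_sq D_def using kappa_ge_1 by (simp add: power_mult_distrib)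
qed

theorem regret_le:
  assumes T: "H + 1 \<le> T"
  shows "regret_vs n m N A B K H P w i c T Ms
    \<le> real T * (Lb * (1+\<kappa>) * (2 * state_trunc_err + ideal_sens * drift) + \<eta>/2 * loss_lip^2)
      + 4 * (real H * (real n * (2*\<kappa>^2)^2)) / (2*\<eta>)"
proof -
  define a where "a t = c t (state P t) (dac_act n H (K i) (P i t) w t (state P t))" for t
  define b where "b t = c t (state comparator t) (dac_act n H (K i) Ms w t (state comparator t))" for t
  define C where "C = Lb * (1+\<kappa>) * (2 * state_trunc_err + ideal_sens * drift) + \<eta>/2 * loss_lip^2"
  have C: "0 \<le> C"
    unfolding C_def state_trunc_err_def drift_def drive_const_def
    using Lb_nonneg kappa_ge_1 gamma_pos gamma_le_1 W_nonneg beta_nonneg[OF N_pos] ideal_sens_nonneg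
      loss_lip_nonneg eta_pos by simp
  have step: "a t - b t \<le> C + (dist_sq t - dist_sq (Suc t)) / (2*\<eta>)" if "t \<in> {H+1..T}" for t
    using cost_minus_loss_le[of t] loss_minus_comparator_cost_le[of t]
      loss_minus_comparator_loss_le[of t] that
    unfolding a_def b_def C_def by (simp add: algebra_simps)
  have "regret_vs n m N A B K H P w i c T Ms = (\<Sum>t\<in>{H+1..T}. a t - b t)"
    unfolding regret_vs_def a_def b_def sum_subtractf ..
  also have "\<dots> \<le> (\<Sum>t\<in>{H+1..T}. C + (dist_sq t - dist_sq (Suc t)) / (2*\<eta>))"
    by (rule sum_mono) (rule step)
  also have "\<dots> = real (card {H+1..T}) * C + (\<Sum>t\<in>{H+1..T}. dist_sq t - dist_sq (Suc t)) / (2*\<eta>)"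
    by (simp add: sum.distrib sum_divide_distrib)
  also have "(\<Sum>t\<in>{H+1..T}. dist_sq t - dist_sq (Suc t)) = dist_sq (H+1) - dist_sq (Suc T)"
    using sum_Suc_diff[of "H+1" T dist_sq] T by (simp add: sum_subtractf)
  also have "real (card {H+1..T}) * C \<le> real T * C" using C by (intro mult_right_mono) auto
  also have "(dist_sq (H+1) - dist_sq (Suc T)) / (2*\<eta>) \<le> 4 * (real H * (real n * (2*\<kappa>^2)^2)) / (2*\<eta>)"
    using dist_sq_le[of "H+1"] dist_sq_nonneg[of "Suc T"] eta_pos by (intro divide_right_mono) auto
  finally show ?thesis unfolding C_def by simp
qed

end

context agc_agent
begin

definition trunc_rate :: real where
  "trunc_rate = \<kappa> * (W + \<beta> * (2 * \<kappa>^2 * W / \<gamma>)) / (2 * \<gamma>)"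

definition regret_rate :: real where
  "regret_rate = Lb * (1+\<kappa>) * 2 * trunc_rate + Lb * (1+\<kappa>) * ideal_sens * ((real H + 1) * (2 * loss_lip))
     + loss_lip^2 / 2 + 4 * (real H * (real n * (2*\<kappa>^2)^2)) / 2"

lemma T_state_trunc_err_le:
  assumes T: "1 \<le> T" and decay: "(1-\<gamma>)^H \<le> 1 / (2 * \<kappa> * real N * sqrt (real T))"
  shows "real T * state_trunc_err \<le> sqrt (real T) * trunc_rate"
proof -
  define sT where "sT = sqrt (real T)"
  have sT: "0 < sT" "real T = sT * sT" unfolding sT_def using T by auto
  have N: "1 \<le> real N" using N_pos by simp
  have "(1-\<gamma>)^(H+1) \<le> (1-\<gamma>)^H" using gamma_pos gamma_le_1 by (intro power_decreasing) auto
  then have "state_trunc_err \<le> \<kappa> * (1 / (2 * \<kappa> * real N * sT)) * (\<kappa> * drive_const / \<gamma>)"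
    unfolding state_trunc_err_def sT_def
    using decay kappa_ge_1 gamma_pos W_nonneg beta_nonneg[OF N_pos] unfolding drive_const_def
    by (intro mult_right_mono mult_left_mono) auto
  then have "real T * state_trunc_err \<le> real T * (\<kappa> * (1 / (2 * \<kappa> * real N * sT)) * (\<kappa> * drive_const / \<gamma>))"
    by (intro mult_left_mono) auto
  also have "\<dots> = sT * (\<kappa> * (drive_const / real N) / (2*\<gamma>))"
    unfolding sT(2) using sT(1) kappa_ge_1 N gamma_pos by (simp add: field_simps)
  also have "\<dots> \<le> sT * trunc_rate"
  proof -
    have "drive_const / real N = W / real N + \<beta> * (2*\<kappa>^2*W/\<gamma>)"
      unfolding drive_const_def using N by (simp add: field_simps)
    also have "W / real N \<le> W" using W_nonneg N by (simp add: divide_le_eq mult_le_cancel_left1 order_trans)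
    finally have "\<kappa> * (drive_const / real N) / (2*\<gamma>) \<le> trunc_rate"
      unfolding trunc_rate_def using kappa_ge_1 gamma_pos by (intro divide_right_mono mult_left_mono) auto
    then show ?thesis using sT by (intro mult_left_mono) auto
  qed
  finally show ?thesis unfolding sT_def .
qed

theorem regret_le_sqrt_T:
  assumes T: "H + 1 \<le> T" and \<eta>: "\<eta> = 1 / sqrt (real T)"
    and decay: "(1-\<gamma>)^H \<le> 1 / (2 * \<kappa> * real N * sqrt (real T))"
  shows "regret_vs n m N A B K H P w i c T Ms \<le> sqrt (real T) * regret_rate"
proof -
  define sT where "sT = sqrt (real T)"
  have sT: "0 < sT" "real T = sT * sT" unfolding sT_def using T by auto
  have "regret_vs n m N A B K H P w i c T Ms
    \<le> real T * (Lb * (1+\<kappa>) * (2 * state_trunc_err + ideal_sens * drift) + \<eta>/2 * loss_lip^2)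
      + 4 * (real H * (real n * (2*\<kappa>^2)^2)) / (2*\<eta>)"
    by (rule regret_le[OF T])
  also have "\<dots> = Lb * (1+\<kappa>) * 2 * (real T * state_trunc_err)
     + sT * (Lb * (1+\<kappa>) * ideal_sens * ((real H + 1) * (2 * loss_lip)) + loss_lip^2 / 2
             + 4 * (real H * (real n * (2*\<kappa>^2)^2)) / 2)"
    unfolding drift_def unfolding \<eta> sT_def[symmetric] sT(2) using sT(1) by (simp add: field_simps)
  also have "\<dots> \<le> Lb * (1+\<kappa>) * 2 * (sT * trunc_rate)
     + sT * (Lb * (1+\<kappa>) * ideal_sens * ((real H + 1) * (2 * loss_lip)) + loss_lip^2 / 2
             + 4 * (real H * (real n * (2*\<kappa>^2)^2)) / 2)"
    using T_state_trunc_err_le[OF _ decay] T Lb_nonneg kappa_ge_1 unfolding sT_def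
    by (intro add_right_mono mult_left_mono) auto
  also have "\<dots> = sT * regret_rate" unfolding regret_rate_def by (simp add: algebra_simps)
  finally show ?thesis unfolding sT_def .
qed

context
  fixes u :: real
  assumes u_ge_1: "1 \<le> u" and W_le_u: "W \<le> u" and inv_gamma_le_u: "1/\<gamma> \<le> u"
    and kappa_le_u: "\<kappa> \<le> u" and beta_le_u: "\<beta> \<le> u" and Lb_le_u: "Lb \<le> u"
    and n_le_u: "real n \<le> u" and H_le_u: "real H \<le> u"
begin

lemma ideal_sens_le: "ideal_sens \<le> 6 * u^5"
proof -
  have H: "(2 * real H + 1) * (real H + 1) \<le> (3*u) * (2*u)"
    using H_le_u u_ge_1 by (intro mult_mono) auto
  have \<kappa>\<beta>W: "\<kappa> * (\<beta> * W) \<le> u * (u * u)"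
    using kappa_le_u beta_le_u W_le_u kappa_ge_1 beta_nonneg[OF N_pos] W_nonneg
    by (intro mult_mono) auto
  have "ideal_sens \<le> ((3*u) * (2*u)) * (u * (u * u))"
    unfolding ideal_sens_def using kappa_ge_1 beta_nonneg[OF N_pos] W_nonneg u_ge_1
    by (intro mult_mono[OF H \<kappa>\<beta>W]) auto
  then show ?thesis by (simp add: power_def numeral_eq_Suc algebra_simps)
qed

lemma loss_lip_le: "loss_lip \<le> 13 * u^7"
proof -
  have "(1+\<kappa>) * ideal_sens \<le> (2*u) * (6*u^5)"
    using kappa_le_u u_ge_1 ideal_sens_le ideal_sens_nonneg by (intro mult_mono) auto
  moreover have "real H * W \<le> u * u" using H_le_u W_le_u W_nonneg by (intro mult_mono) auto
  moreover have "u * u \<le> u^6" using power_increasing[OF _ u_ge_1, of 2 6] by (simp add: power2_eq_square)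
  ultimately have "(1+\<kappa>) * ideal_sens + real H * W \<le> 13 * u^6"
    by (simp add: power_def numeral_eq_Suc algebra_simps)
  then have "loss_lip \<le> u * (13 * u^6)"
    unfolding loss_lip_def using Lb_le_u Lb_nonneg ideal_sens_nonneg kappa_ge_1 W_nonneg
    by (intro mult_mono) auto
  then show ?thesis by (simp add: power_def numeral_eq_Suc algebra_simps)
qed

lemma trunc_rate_nonneg: "0 \<le> trunc_rate"
  unfolding trunc_rate_def using kappa_ge_1 W_nonneg beta_nonneg[OF N_pos] gamma_pos by simp

lemma trunc_rate_le: "trunc_rate \<le> 3/2 * u^7"
proof -
  have "\<beta> * (2*\<kappa>^2*W/\<gamma>) = 2 * (\<beta> * (\<kappa>^2 * (W * (1/\<gamma>))))" by simp
  also have "\<dots> \<le> 2 * (u * (u^2 * (u * u)))"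
    using beta_le_u kappa_le_u W_le_u inv_gamma_le_u beta_nonneg[OF N_pos] kappa_ge_1 W_nonneg gamma_pos
    by (intro mult_left_mono mult_mono power_mono) auto
  finally have "W + \<beta> * (2*\<kappa>^2*W/\<gamma>) \<le> 3 * u^5"
    using W_le_u power_increasing[OF _ u_ge_1, of 1 5] by (simp add: power_def numeral_eq_Suc algebra_simps)
  then have "\<kappa> * (W + \<beta> * (2*\<kappa>^2*W/\<gamma>)) * (1/\<gamma>) / 2 \<le> u * (3 * u^5) * u / 2"
    using kappa_le_u inv_gamma_le_u kappa_ge_1 W_nonneg beta_nonneg[OF N_pos] gamma_pos
    by (intro divide_right_mono mult_mono) auto
  moreover have "trunc_rate = \<kappa> * (W + \<beta> * (2*\<kappa>^2*W/\<gamma>)) * (1/\<gamma>) / 2"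
    unfolding trunc_rate_def by simp
  moreover have "u * (3 * u^5) * u / 2 = 3/2 * u^7" by (simp add: power_def numeral_eq_Suc algebra_simps)
  ultimately show ?thesis by simp
qed

lemma regret_rate_le: "regret_rate \<le> 1000 * u^15"
proof -
  have Lk: "Lb * (1+\<kappa>) \<le> u * (2*u)"
    using Lb_le_u kappa_le_u kappa_ge_1 u_ge_1 Lb_nonneg by (intro mult_mono) auto
  have Lk0: "0 \<le> Lb * (1+\<kappa>)" using Lb_nonneg kappa_ge_1 by simp
  have "Lb * (1+\<kappa>) * 2 \<le> (u * (2*u)) * 2" using Lk by simp
  then have "Lb * (1+\<kappa>) * 2 * trunc_rate \<le> (u * (2*u)) * 2 * (3/2 * u^7)"
    using Lk0 trunc_rate_nonneg u_ge_1 by (intro mult_mono[OF _ trunc_rate_le]) auto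
  also have "\<dots> = 6 * u^9" by (simp add: power_def numeral_eq_Suc algebra_simps)
  finally have t1: "Lb * (1+\<kappa>) * 2 * trunc_rate \<le> 6 * u^15"
    using power_increasing[OF _ u_ge_1, of 9 15] by simp
  have a: "Lb * (1+\<kappa>) * ideal_sens \<le> (u * (2*u)) * (6*u^5)"
    using Lk0 ideal_sens_nonneg u_ge_1 by (intro mult_mono[OF Lk ideal_sens_le]) auto
  have b: "(real H + 1) * (2 * loss_lip) \<le> (2*u) * (2 * (13 * u^7))"
    using H_le_u u_ge_1 loss_lip_le loss_lip_nonneg by (intro mult_mono) auto
  have "Lb * (1+\<kappa>) * ideal_sens * ((real H + 1) * (2 * loss_lip))
      \<le> (u * (2*u)) * (6*u^5) * ((2*u) * (2 * (13 * u^7)))"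
    using Lk0 ideal_sens_nonneg loss_lip_nonneg u_ge_1 by (intro mult_mono[OF a b]) auto
  also have "\<dots> = 624 * u^15" by (simp add: power_def numeral_eq_Suc algebra_simps)
  finally have t2: "Lb * (1+\<kappa>) * ideal_sens * ((real H + 1) * (2 * loss_lip)) \<le> 624 * u^15" .
  have "loss_lip^2 \<le> (13 * u^7)^2" using loss_lip_le loss_lip_nonneg by (intro power_mono) auto
  also have "\<dots> = 169 * u^14" by (simp add: power_def numeral_eq_Suc algebra_simps)
  finally have t3: "loss_lip^2 / 2 \<le> 85 * u^15"
    using power_increasing[OF _ u_ge_1, of 14 15] zero_le_power[of u 15] u_ge_1 by linarith
  have "real H * (real n * (2*\<kappa>^2)^2) \<le> u * (u * (2*u^2)^2)"
    using H_le_u n_le_u kappa_le_u kappa_ge_1 by (intro mult_mono power_mono mult_left_mono) auto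
  also have "\<dots> = 4 * u^6" by (simp add: power_def numeral_eq_Suc algebra_simps)
  finally have t4: "4 * (real H * (real n * (2*\<kappa>^2)^2)) / 2 \<le> 8 * u^15"
    using power_increasing[OF _ u_ge_1, of 6 15] by simp
  show ?thesis unfolding regret_rate_def using t1 t2 t3 t4 zero_le_power[of u 15] u_ge_1 by linarith
qed

end

end

section \<open>The horizon and the final bound\<close>

lemma Hpar_decay:
  assumes \<gamma>: "0 < \<gamma>" "\<gamma> \<le> 1" and \<kappa>: "1 \<le> \<kappa>" and N: "1 \<le> N" and T: "1 \<le> T"
  shows "(1-\<gamma>)^(Hpar \<kappa> \<gamma> N T) \<le> 1 / (2 * \<kappa> * real N * sqrt (real T))"
proof -
  define y where "y = 2 * \<kappa> * real N * sqrt (real T)"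
  define H where "H = Hpar \<kappa> \<gamma> N T"
  have y: "0 < y" unfolding y_def using \<kappa> N T by simp
  have "ln y / \<gamma> \<le> real H" unfolding H_def Hpar_def y_def by (rule real_nat_ceiling_ge)
  then have H: "ln y \<le> real H * \<gamma>" using \<gamma> by (simp add: field_simps)
  have "(1-\<gamma>)^H \<le> exp (-\<gamma>)^H"
    using \<gamma> exp_ge_add_one_self[of "-\<gamma>"] by (intro power_mono) auto
  also have "\<dots> = exp (real H * (-\<gamma>))" by (rule exp_of_nat_mult[symmetric])
  also have "\<dots> \<le> exp (- ln y)" using H by simp
  also have "\<dots> = 1 / y" using y by (simp add: exp_minus inverse_eq_divide)
  finally show ?thesis unfolding H_def y_def .
qed

lemma ln_horizon_arg_le:
  assumes \<kappa>: "1 \<le> \<kappa>" "\<kappa> \<le> S" and N: "1 \<le> N" and T: "1 \<le> T"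
  shows "ln (2 * \<kappa> * real N * sqrt (real T)) \<le> 2 * S * (1 + ln (real N * real T))"
proof -
  define \<Lambda> where "\<Lambda> = 1 + ln (real N * real T)"
  have "1 \<le> real N * real T" using mult_mono[of 1 "real N" 1 "real T"] N T by simp
  then have \<Lambda>: "1 \<le> \<Lambda>" unfolding \<Lambda>_def by simp
  have "0 \<le> ln (real T)" using T by simp
  have "ln (2 * \<kappa> * real N * sqrt (real T)) = ln 2 + ln \<kappa> + ln (real N) + ln (real T) / 2"
    using \<kappa> N T by (simp add: ln_mult ln_sqrt)
  also have "\<dots> \<le> 1 + (\<kappa> - 1) + ln (real N) + ln (real T)"
    using ln_le_minus_one[of 2] ln_le_minus_one[of \<kappa>] \<kappa> \<open>0 \<le> ln (real T)\<close> by simp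
  also have "\<dots> = \<kappa> + (\<Lambda> - 1)" unfolding \<Lambda>_def using N T by (simp add: ln_mult)
  also have "\<dots> \<le> S * \<Lambda> + S * \<Lambda>"
    using \<kappa> \<Lambda> mult_left_mono[OF \<Lambda>, of S] mult_right_mono[of 1 S \<Lambda>] by linarith
  finally show ?thesis unfolding \<Lambda>_def by simp
qed

lemma Hpar_le:
  assumes \<gamma>: "0 < \<gamma>" "1/\<gamma> \<le> S" and \<kappa>: "1 \<le> \<kappa>" "\<kappa> \<le> S" and N: "1 \<le> N" and T: "1 \<le> T"
  shows "real (Hpar \<kappa> \<gamma> N T) \<le> 3 * S^2 * (1 + ln (real N * real T))"
proof -
  define \<Lambda> where "\<Lambda> = 1 + ln (real N * real T)"
  define x where "x = ln (2 * \<kappa> * real N * sqrt (real T)) / \<gamma>"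
  have "1 \<le> real N * real T" using mult_mono[of 1 "real N" 1 "real T"] N T by simp
  then have \<Lambda>: "1 \<le> \<Lambda>" unfolding \<Lambda>_def by simp
  have "1 \<le> 2 * \<kappa> * real N" using mult_mono[of 1 "2*\<kappa>" 1 "real N"] \<kappa> N by simp
  then have "1 \<le> 2 * \<kappa> * real N * sqrt (real T)" using mult_mono[of 1 _ 1 "sqrt (real T)"] T by simp
  then have ln_nonneg: "0 \<le> ln (2 * \<kappa> * real N * sqrt (real T))" by simp
  then have x: "0 \<le> x" unfolding x_def using \<gamma> by simp
  have "x = ln (2 * \<kappa> * real N * sqrt (real T)) * (1/\<gamma>)" unfolding x_def by simp
  also have "\<dots> \<le> (2 * S * \<Lambda>) * S"
    using ln_horizon_arg_le[OF \<kappa> N T] ln_nonneg \<gamma> unfolding \<Lambda>_def by (intro mult_mono) auto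
  finally have "x \<le> 2 * S^2 * \<Lambda>" by (simp add: power2_eq_square mult_ac)
  moreover have "1 \<le> S^2" using \<kappa> by (simp add: one_le_power)
  then have "1 \<le> S^2 * \<Lambda>" using mult_mono[of 1 "S^2" 1 \<Lambda>] \<Lambda> by simp
  moreover have "real (Hpar \<kappa> \<gamma> N T) \<le> x + 1"
    unfolding Hpar_def x_def[symmetric] using x of_int_ceiling_le_add_one[of x] by simp
  ultimately show ?thesis unfolding \<Lambda>_def by linarith
qed

lemma regret_le_poly:
  fixes W \<gamma> \<kappa> \<beta> Lb :: real and d H :: nat
  assumes W: "0 \<le> W" and \<gamma>: "0 < \<gamma>" and \<kappa>: "1 \<le> \<kappa>" and Lb: "0 < Lb"
    and H: "H = Hpar \<kappa> \<gamma> N T" and i: "i < N" and n: "n \<le> d"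
    and \<beta>: "\<beta> = Max ((\<lambda>j. opnorm n (m j) (B j)) ` {..<N})"
    and stable: "glob_strongly_stable n m N A B K \<kappa> \<gamma>"
    and cost: "\<forall>t. lipschitz_cost n (m i) Lb (c t)"
    and w: "\<forall>t. vnorm n (w t) \<le> W"
    and T: "H + 1 \<le> T"
    and others: "\<forall>j<N. j \<noteq> i \<longrightarrow> (\<forall>t. P j t \<in> calM n (m j) H \<kappa> \<gamma>)"
    and run: "agc_run n m N A B K H \<kappa> \<gamma> (1 / sqrt (real T)) i c w P"
    and Ms: "Ms \<in> calM n (m i) H \<kappa> \<gamma>"
  shows "regret_vs n m N A B K H P w i c T Ms
     \<le> (1000 * 4^15 * (1 + W + 1/\<gamma> + \<kappa> + \<beta> + Lb + real d)^30) * sqrt (real T)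
         * (1 + ln (real N * real T)) powr 15"
proof -
  define S where "S = 1 + W + 1/\<gamma> + \<kappa> + \<beta> + Lb + real d"
  define \<Lambda> where "\<Lambda> = 1 + ln (real N * real T)"
  define u where "u = 4 * S^2 * \<Lambda>"
  interpret agc_agent n m N A B K H w \<kappa> \<gamma> W \<beta> i c P Ms "1 / sqrt (real T)" Lb
  proof unfold_locales
    show "opnorm n (m j) (B j) \<le> \<beta>" if "j < N" for j
      unfolding \<beta> using that by (intro Max_ge) auto
  qed (use stable \<gamma> \<kappa> w i cost Lb others run Ms T in auto)
  have N: "1 \<le> N" and T1: "1 \<le> T" using i T by auto
  have "0 < 1/\<gamma>" "0 \<le> real n" "real n \<le> real d" using \<gamma> n by auto
  then have S: "1 \<le> S" "W \<le> S" "1/\<gamma> \<le> S" "\<kappa> \<le> S" "\<beta> \<le> S" "Lb \<le> S" "real n \<le> S"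
    unfolding S_def using W \<kappa> beta_nonneg[OF N_pos] Lb by linarith+
  have "1 \<le> real N * real T" using mult_mono[of 1 "real N" 1 "real T"] N T1 by simp
  then have \<Lambda>: "1 \<le> \<Lambda>" unfolding \<Lambda>_def by simp
  have "S \<le> S^2 * \<Lambda>"
    using S(1) \<Lambda> mult_mono[of S "S^2" 1 \<Lambda>] by (simp add: power2_eq_square)
  then have S_le_u: "S \<le> u" unfolding u_def using S(1) \<Lambda> by simp
  have "real H \<le> 3 * S^2 * \<Lambda>" unfolding H \<Lambda>_def by (rule Hpar_le[OF \<gamma> S(3) \<kappa> S(4) N T1])
  then have H_le_u: "real H \<le> u" unfolding u_def using \<Lambda> by simp
  have "regret_vs n m N A B K H P w i c T Ms \<le> sqrt (real T) * regret_rate"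
    using Hpar_decay[OF \<gamma> gamma_le_1 \<kappa> N T1] unfolding H[symmetric] by (intro regret_le_sqrt_T[OF T refl])
  also have "\<dots> \<le> sqrt (real T) * (1000 * u^15)"
    using regret_rate_le[of u] S S_le_u H_le_u by (intro mult_left_mono) auto
  also have "\<dots> = 1000 * 4^15 * S^30 * sqrt (real T) * \<Lambda> powr 15"
    unfolding u_def using \<Lambda> by (simp add: power_mult_distrib power_mult[symmetric] powr_realpow)
  finally show ?thesis unfolding S_def \<Lambda>_def .
qed

theorem theorem4:
  shows "\<exists>ce Kc :: real. \<exists>k :: nat. ce \<ge> 0 \<and>
    (\<forall>(W::real) (\<gamma>::real) (\<kappa>::real) (\<beta>::real) (Lb::real) (d::nat).
       W \<ge> 0 \<and> \<gamma> > 0 \<and> \<kappa> \<ge> 1 \<and> \<beta> \<ge> 0 \<and> Lb > 0 \<longrightarrow>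
       (\<exists>c0 C :: real. c0 > 0 \<and> C > 0
          \<and> c0 \<le> Kc * (1 + W + 1/\<gamma> + \<kappa> + \<beta> + Lb + real d) ^ k
          \<and> C \<le> Kc * (1 + W + 1/\<gamma> + \<kappa> + \<beta> + Lb + real d) ^ k
          \<and> (\<forall>(N::nat) (n::nat) (m::nat \<Rightarrow> nat) (A::mat) (B::nat \<Rightarrow> mat) (K::nat \<Rightarrow> mat)
               (i::nat) (c::nat \<Rightarrow> vec \<Rightarrow> vec \<Rightarrow> real) (w::nat \<Rightarrow> vec)
               (P::nat \<Rightarrow> nat \<Rightarrow> nat \<Rightarrow> mat) (T::nat) (Ms::nat \<Rightarrow> mat).
               let H = Hpar \<kappa> \<gamma> N T in
               1 \<le> N \<and> i < N \<and> n \<le> d \<and> (\<forall>j<N. m j \<le> d)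
               \<and> \<beta> = Max ((\<lambda>j. opnorm n (m j) (B j)) ` {..<N})
               \<and> glob_strongly_stable n m N A B K \<kappa> \<gamma>
               \<and> (\<forall>t. convex_cost (c t) \<and> lipschitz_cost n (m i) Lb (c t))
               \<and> (\<forall>t. vnorm n (w t) \<le> W)
               \<and> H + 1 \<le> T
               \<and> (\<forall>j<N. j \<noteq> i \<longrightarrow> (\<forall>t. P j t \<in> calM n (m j) H \<kappa> \<gamma>))
               \<and> agc_run n m N A B K H \<kappa> \<gamma> (c0 / sqrt (real T)) i c w P
               \<and> Ms \<in> calM n (m i) H \<kappa> \<gamma>
               \<longrightarrow> regret_vs n m N A B K H P w i c T Ms
                     \<le> C * sqrt (real T) * (1 + ln (real N * real T)) powr ce)))"
proof (rule exI[of _ 15], rule exI[of _ "1000 * 4^15"], rule exI[of _ 30], intro conjI allI impI)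
  fix W \<gamma> \<kappa> \<beta> Lb :: real and d :: nat
  assume params: "W \<ge> 0 \<and> \<gamma> > 0 \<and> \<kappa> \<ge> 1 \<and> \<beta> \<ge> 0 \<and> Lb > 0"
  define S where "S = 1 + W + 1/\<gamma> + \<kappa> + \<beta> + Lb + real d"
  have "1 \<le> S" unfolding S_def using params by (simp add: add_increasing)
  then have "1 \<le> S^30" by (rule one_le_power)
  then have C: "1 \<le> 1000 * 4^15 * S^30" by simp
  show "\<exists>c0 C :: real. c0 > 0 \<and> C > 0
      \<and> c0 \<le> 1000 * 4^15 * (1 + W + 1/\<gamma> + \<kappa> + \<beta> + Lb + real d) ^ 30
      \<and> C \<le> 1000 * 4^15 * (1 + W + 1/\<gamma> + \<kappa> + \<beta> + Lb + real d) ^ 30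
      \<and> (\<forall>N n m A B K i c w P T Ms. let H = Hpar \<kappa> \<gamma> N T in
           1 \<le> N \<and> i < N \<and> n \<le> d \<and> (\<forall>j<N. m j \<le> d)
           \<and> \<beta> = Max ((\<lambda>j. opnorm n (m j) (B j)) ` {..<N})
           \<and> glob_strongly_stable n m N A B K \<kappa> \<gamma>
           \<and> (\<forall>t. convex_cost (c t) \<and> lipschitz_cost n (m i) Lb (c t))
           \<and> (\<forall>t. vnorm n (w t) \<le> W)
           \<and> H + 1 \<le> T
           \<and> (\<forall>j<N. j \<noteq> i \<longrightarrow> (\<forall>t. P j t \<in> calM n (m j) H \<kappa> \<gamma>))
           \<and> agc_run n m N A B K H \<kappa> \<gamma> (c0 / sqrt (real T)) i c w P
           \<and> Ms \<in> calM n (m i) H \<kappa> \<gamma>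
           \<longrightarrow> regret_vs n m N A B K H P w i c T Ms
                 \<le> C * sqrt (real T) * (1 + ln (real N * real T)) powr 15)"
    unfolding S_def[symmetric] Let_def
  proof (rule exI[of _ 1], rule exI[of _ "1000 * 4^15 * S^30"], intro conjI allI impI)
    show "(0::real) < 1" "0 < 1000 * 4^15 * S^30" "1 \<le> 1000 * 4^15 * S^30"
      using C \<open>1 \<le> S\<close> by simp_all
    show "1000 * 4^15 * S^30 \<le> 1000 * 4^15 * (S::real)^30" by (rule order_refl)
  qed (elim conjE, rule regret_le_poly[where W=W and \<gamma>=\<gamma> and \<kappa>=\<kappa> and \<beta>=\<beta> and Lb=Lb and d=d, folded S_def], insert params, auto)
qed simp

end
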